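(* Let $\mu$ be a Borel measure on $\mathbb{R}^d$ such that $\mu(Q)<\infty$ for every dyadic cube $Q\in\mathscr{D}$ and such that each of the $2^d$ $d$-dimensional quadrants has infinite $\mu$-measure. Let $f\in L^1(\mu)$ and $\lambda>0$, and let $\{Q_j\}_j$ be the (disjoint) maximal dyadic cubes covering $\Omega_\lambda=\{x: M_{\mathscr{D}}f(x)>\lambda\}$, i.e. $\Omega_\lambda=\bigcup_j Q_j$ and $\langle |f|\rangle_Q\le\lambda<\langle |f|\rangle_{Q_j}$ for every dyadic $Q\supsetneq Q_j$. Write $f=g+b+\beta$ where $$g=f\,1_{\mathbb{R}^d\setminus\Omega_\lambda}+\sum_j\langle f\rangle_{\widehat{Q}_j}1_{Q_j}+\sum_j\big(\langle f\rangle_{Q_j}-\langle f\rangle_{\widehat{Q}_j}\big)\frac{\mu(Q_j)}{\mu(\widehat{Q}_j)}1_{\widehat{Q}_j},$$ $$b=\sum_j b_j,\quad b_j=\big(f-\langle f\rangle_{Q_j}\big)1_{Q_j},\qquad \beta=\sum_j\beta_j,\quad \beta_j=\big(\langle f\rangle_{Q_j}-\langle f\rangle_{\widehat{Q}_j}\big)\Big(1_{Q_j}-\frac{\mu(Q_j)}{\mu(\widehat{Q}_j)}1_{\widehat{Q}_j}\Big).$$ Then: (a) for every $1\le p<\infty$, $\|g\|_{L^p(\mu)}^p\le C_p\,\lambda^{p-1}\|f\|_{L^1(\mu)}$, with $C_p$ depending only on $p$; (b) $\operatorname{supp}(b_j)\subset Q_j$, $\int_{\mathbb{R}^d}b_j\,d\mu=0$,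 and $\sum_j\|b_j\|_{L^1(\mu)}\le 2\|f\|_{L^1(\mu)}$; (c) $\operatorname{supp}(\beta_j)\subset\widehat{Q}_j$, $\int_{\mathbb{R}^d}\beta_j\,d\mu=0$, and $\sum_j\|\beta_j\|_{L^1(\mu)}\le 4\|f\|_{L^1(\mu)}$.
   Context: $\mathscr{D}$ is the standard dyadic grid in $\mathbb{R}^d$ (cubes $2^{-k}([0,1)^d+m)$, $k\in\mathbb{Z}$, $m\in\mathbb{Z}^d$). For $Q\in\mathscr{D}$, $\widehat{Q}$ denotes its dyadic parent. The $d$-dimensional quadrants are the sets $\mathbb{R}^{\pm}\times\dots\times\mathbb{R}^{\pm}$ with $\mathbb{R}^+=[0,\infty)$, $\mathbb{R}^-=(-\infty,0)$. For $Q\in\mathscr{D}$, $\langle f\rangle_Q=\mu(Q)^{-1}\int_Q f\,d\mu$, with $\langle f\rangle_Q=0$ if $\mu(Q)=0$. The dyadic maximal function is $M_{\mathscr{D}}f(x)=\sup_{x\in Q\in\mathscr{D}}\langle |f|\rangle_Q$. *)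

theory Defs
  imports "HOL-Analysis.Analysis"
begin

(* Points of R^d are encoded as extensional functions on the index set {..<d},
  i.e. elements of {..<d} <rightarrow><^sub>E UNIV (the carrier of the product measure space).
  The dimension d is an explicit natural number so that constants can be
  quantified uniformly in d. *)

definition dcube :: "nat \<Rightarrow> int \<Rightarrow> (nat \<Rightarrow> int) \<Rightarrow> (nat \<Rightarrow> real) set" where
  "dcube d k m = {x \<in> {..<d} \<rightarrow>\<^sub>E (UNIV :: real set).
     \<forall>i<d. 2 powr (- real_of_int k) * real_of_int (m i) \<le> x i
          \<and> x i < 2 powr (- real_of_int k) * (real_of_int (m i) + 1)}"

definition dyadic :: "nat \<Rightarrow> (nat \<Rightarrow> real) set set" where
  "dyadic d = {Q. \<exists>k m. Q = dcube d k m}"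

definition dparent :: "nat \<Rightarrow> (nat \<Rightarrow> real) set \<Rightarrow> (nat \<Rightarrow> real) set" where
  "dparent d Q = (THE R. \<exists>k m. Q = dcube d k m \<and> R = dcube d (k - 1) (\<lambda>i. m i div 2))"

definition quadrant :: "nat \<Rightarrow> (nat \<Rightarrow> bool) \<Rightarrow> (nat \<Rightarrow> real) set" where
  "quadrant d s = {x \<in> {..<d} \<rightarrow>\<^sub>E (UNIV :: real set).
     \<forall>i<d. (if s i then 0 \<le> x i else x i < 0)}"

definition avg :: "'a measure \<Rightarrow> ('a \<Rightarrow> real) \<Rightarrow> 'a set \<Rightarrow> real" where
  "avg M f Q = (if measure M Q = 0 then 0 else (LINT x:Q|M. f x) / measure M Q)"

definition dyadic_max :: "nat \<Rightarrow> (nat \<Rightarrow> real) measure \<Rightarrow> ((nat \<Rightarrow> real) \<Rightarrow> real)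
    \<Rightarrow> (nat \<Rightarrow> real) \<Rightarrow> ereal" where
  "dyadic_max d M f x = (SUP Q \<in> {Q \<in> dyadic d. x \<in> Q}. ereal (avg M (\<lambda>y. \<bar>f y\<bar>) Q))"

definition Omega :: "nat \<Rightarrow> (nat \<Rightarrow> real) measure \<Rightarrow> ((nat \<Rightarrow> real) \<Rightarrow> real)
    \<Rightarrow> real \<Rightarrow> (nat \<Rightarrow> real) set" where
  "Omega d M f lam = {x \<in> space M. dyadic_max d M f x > ereal lam}"

definition maxcubes :: "nat \<Rightarrow> (nat \<Rightarrow> real) measure \<Rightarrow> ((nat \<Rightarrow> real) \<Rightarrow> real)
    \<Rightarrow> real \<Rightarrow> (nat \<Rightarrow> real) set set" where
  "maxcubes d M f lam = {Q \<in> dyadic d. lam < avg M (\<lambda>y. \<bar>f y\<bar>) Q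
      \<and> (\<forall>R \<in> dyadic d. Q \<subset> R \<longrightarrow> avg M (\<lambda>y. \<bar>f y\<bar>) R \<le> lam)}"

definition CZ_g :: "nat \<Rightarrow> (nat \<Rightarrow> real) measure \<Rightarrow> ((nat \<Rightarrow> real) \<Rightarrow> real)
    \<Rightarrow> real \<Rightarrow> (nat \<Rightarrow> real) \<Rightarrow> real" where
  "CZ_g d M f lam x =
     f x * indicator (space M - Omega d M f lam) x
     + (\<Sum>\<^sub>\<infinity>Q \<in> maxcubes d M f lam. avg M f (dparent d Q) * indicator Q x)
     + (\<Sum>\<^sub>\<infinity>Q \<in> maxcubes d M f lam.
          (avg M f Q - avg M f (dparent d Q)) * (measure M Q / measure M (dparent d Q))
          * indicator (dparent d Q) x)"

definition CZ_b :: "(nat \<Rightarrow> real) measure \<Rightarrow> ((nat \<Rightarrow> real) \<Rightarrow> real)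
    \<Rightarrow> (nat \<Rightarrow> real) set \<Rightarrow> (nat \<Rightarrow> real) \<Rightarrow> real" where
  "CZ_b M f Q x = (f x - avg M f Q) * indicator Q x"

definition CZ_beta :: "nat \<Rightarrow> (nat \<Rightarrow> real) measure \<Rightarrow> ((nat \<Rightarrow> real) \<Rightarrow> real)
    \<Rightarrow> (nat \<Rightarrow> real) set \<Rightarrow> (nat \<Rightarrow> real) \<Rightarrow> real" where
  "CZ_beta d M f Q x = (avg M f Q - avg M f (dparent d Q))
      * (indicator Q x - (measure M Q / measure M (dparent d Q)) * indicator (dparent d Q) x)"

definition dyadic_setting :: "nat \<Rightarrow> (nat \<Rightarrow> real) measure \<Rightarrow> bool" where
  "dyadic_setting d M \<longleftrightarrow>
     sets M = sets (\<Pi>\<^sub>M i\<in>{..<d}. (borel :: real measure))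
     \<and> (\<forall>Q \<in> dyadic d. emeasure M Q < \<infinity>)
     \<and> (\<forall>s. emeasure M (quadrant d s) = \<infinity>)"

end

(* For the bad parts everything is local to one cube: b_j and beta_j have mean zero
   by construction, and their L1 norms are bounded by multiples of the mass of |f| on Q_j because
   maximality gives |avg(f, parent Q_j)| <= lam < avg(|f|, Q_j); the cubes Q_j are disjoint.
   For the good part g = f 1_(complement of Omega) + g1 + g2: |f| <= lam a.e. outside Omega (a dyadic
   differentiation argument, proved by approximating measurable sets from outside by countable
   unions of dyadic cubes); |g1| <= lam on the union of the Q_j; and |g2| is dominated by
   S = sum_j |c_j| 1_(parent Q_j). The parents containing a point form a chain, and the Carleson
   packing sum_(parent Q_j within R) |c_j| mu(parent Q_j) <= 2 lam mu(R) then gives the moment bounds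
   int S^(n+1) <= (n+1)! (2 lam)^n 2 |f|_1. Comparing t^p with lam^(p-n) t^n + lam^(p-n-1) t^(n+1)
   for n = floor p interpolates these integer moments to the L^p bound. *)

theory Submission
  imports Defs
begin

lemma countable_exhaustion_infsum_ennreal:
  assumes I: "countable I"
  obtains F where "\<And>n. finite (F n)" "\<And>n. F n \<subseteq> I" "incseq F"
    "\<And>g :: 'a \<Rightarrow> ennreal. (\<Sum>\<^sub>\<infinity>i\<in>I. g i) = (SUP n. sum g (F n))"
proof (cases "I = {}")
  case True
  show ?thesis by (rule that[of "\<lambda>_. {}"]) (auto simp: True incseq_def)
next
  case False
  define F where "F n = from_nat_into I ` {..<n}" for n
  have fin: "finite (F n)" and sub: "F n \<subseteq> I" for n
    unfolding F_def using from_nat_into[OF False] by auto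
  have inc: "incseq F" unfolding F_def incseq_def by auto
  have "(\<Sum>\<^sub>\<infinity>i\<in>I. g i) = (SUP n. sum g (F n))" for g :: "'a \<Rightarrow> ennreal"
  proof -
    have "(\<Sum>\<^sub>\<infinity>i\<in>I. g i) = (SUP G\<in>{G. finite G \<and> G \<subseteq> I}. sum g G)"
      by (rule nonneg_infsum_complete) simp
    also have "\<dots> = (SUP n. sum g (F n))"
    proof (rule antisym)
      show "(SUP G\<in>{G. finite G \<and> G \<subseteq> I}. sum g G) \<le> (SUP n. sum g (F n))"
      proof (rule SUP_least)
        fix G assume G: "G \<in> {G. finite G \<and> G \<subseteq> I}"
        then obtain k where k: "to_nat_on I ` G \<subseteq> {..<k}"
          using finite_nat_bounded[of "to_nat_on I ` G"] by auto
        have "G \<subseteq> F k"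
          unfolding F_def using G k from_nat_into_to_nat_on[OF I] by (auto intro!: image_eqI)
        then have "sum g G \<le> sum g (F k)" by (intro sum_mono2 fin) auto
        also have "\<dots> \<le> (SUP n. sum g (F n))" by (rule SUP_upper) simp
        finally show "sum g G \<le> (SUP n. sum g (F n))" .
      qed
      show "(SUP n. sum g (F n)) \<le> (SUP G\<in>{G. finite G \<and> G \<subseteq> I}. sum g G)"
        using fin sub by (intro SUP_least SUP_upper) auto
    qed
    finally show ?thesis .
  qed
  then show ?thesis by (rule that[OF fin sub inc])
qed

lemma borel_measurable_infsum_ennreal:
  assumes "countable I" "\<And>i. i \<in> I \<Longrightarrow> u i \<in> borel_measurable M"
  shows "(\<lambda>x. (\<Sum>\<^sub>\<infinity>i\<in>I. u i x :: ennreal)) \<in> borel_measurable M"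
proof -
  obtain F where F: "\<And>n. finite (F n)" "\<And>n. F n \<subseteq> I" "incseq F"
    "\<And>g :: _ \<Rightarrow> ennreal. (\<Sum>\<^sub>\<infinity>i\<in>I. g i) = (SUP n. sum g (F n))"
    using countable_exhaustion_infsum_ennreal[OF assms(1)] by metis
  have "(\<lambda>x. SUP n. (\<Sum>i\<in>F n. u i x)) \<in> borel_measurable M"
    using F(2) assms(2) by (intro borel_measurable_SUP borel_measurable_sum) auto
  then show ?thesis using F(4) by simp
qed

lemma nn_integral_infsum:
  assumes "countable I" "\<And>i. i \<in> I \<Longrightarrow> u i \<in> borel_measurable M"
  shows "(\<integral>\<^sup>+x. (\<Sum>\<^sub>\<infinity>i\<in>I. u i x) \<partial>M) = (\<Sum>\<^sub>\<infinity>i\<in>I. \<integral>\<^sup>+x. u i x \<partial>M)"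
proof -
  obtain F where F: "\<And>n. finite (F n)" "\<And>n. F n \<subseteq> I" "incseq F"
    "\<And>g :: _ \<Rightarrow> ennreal. (\<Sum>\<^sub>\<infinity>i\<in>I. g i) = (SUP n. sum g (F n))"
    using countable_exhaustion_infsum_ennreal[OF assms(1)] by metis
  have inc: "incseq (\<lambda>n x. \<Sum>i\<in>F n. u i x)"
    using F(1,3) by (auto simp: incseq_def le_fun_def intro!: sum_mono2)
  have "(\<integral>\<^sup>+x. (\<Sum>\<^sub>\<infinity>i\<in>I. u i x) \<partial>M) = (\<integral>\<^sup>+x. (SUP n. \<Sum>i\<in>F n. u i x) \<partial>M)"
    using F(4) by simp
  also have "\<dots> = (SUP n. \<integral>\<^sup>+x. (\<Sum>i\<in>F n. u i x) \<partial>M)"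
    using F(2) assms(2) by (intro nn_integral_monotone_convergence_SUP[OF inc] borel_measurable_sum) auto
  also have "\<dots> = (SUP n. \<Sum>i\<in>F n. \<integral>\<^sup>+x. u i x \<partial>M)"
    using F(2) assms(2) by (intro SUP_cong refl nn_integral_sum) auto
  also have "\<dots> = (\<Sum>\<^sub>\<infinity>i\<in>I. \<integral>\<^sup>+x. u i x \<partial>M)" using F(4) by simp
  finally show ?thesis .
qed

lemma infsum_indicator_disjoint_ennreal:
  assumes "disjoint F"
  shows "(\<Sum>\<^sub>\<infinity>Q\<in>F. c * indicator Q x) = (c::ennreal) * indicator (\<Union>F) x"
proof (cases "\<exists>Q0\<in>F. x \<in> Q0")
  case True
  then obtain Q0 where Q0: "Q0 \<in> F" "x \<in> Q0" by blast
  have "(\<Sum>\<^sub>\<infinity>Q\<in>F. c * indicator Q x) = (\<Sum>\<^sub>\<infinity>Q\<in>{Q0}. c * indicator Q x)"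
  proof (rule infsum_cong_neutral)
    fix Q assume "Q \<in> F - {Q0}"
    then have "Q \<inter> Q0 = {}" using assms Q0(1) by (auto simp: disjoint_def)
    then show "c * indicator Q x = 0" using Q0(2) by (auto simp: indicator_def)
  qed (use Q0 in auto)
  then show ?thesis using Q0 by (auto simp: indicator_def)
next
  case False
  then show ?thesis by (auto simp: indicator_def intro: infsum_0)
qed

lemma ennreal_abs_infsum_le:
  fixes h :: "'i \<Rightarrow> real"
  shows "ennreal \<bar>\<Sum>\<^sub>\<infinity>i\<in>I. h i\<bar> \<le> (\<Sum>\<^sub>\<infinity>i\<in>I. ennreal \<bar>h i\<bar>)"
proof (cases "h summable_on I")
  case True
  have sa: "(\<lambda>i. \<bar>h i\<bar>) summable_on I" using True summable_on_iff_abs_summable_on_real by auto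
  have "\<bar>\<Sum>\<^sub>\<infinity>i\<in>I. h i\<bar> \<le> (\<Sum>\<^sub>\<infinity>i\<in>I. \<bar>h i\<bar>)"
    using norm_infsum_le[OF has_sum_infsum[OF True] has_sum_infsum[OF sa]] by simp
  then have "ennreal \<bar>\<Sum>\<^sub>\<infinity>i\<in>I. h i\<bar> \<le> ennreal (\<Sum>\<^sub>\<infinity>i\<in>I. \<bar>h i\<bar>)" by (rule ennreal_leI)
  also have "\<dots> = (SUP F\<in>{F. finite F \<and> F \<subseteq> I}. (\<Sum>i\<in>F. ennreal \<bar>h i\<bar>))"
    using infsum_nonneg_is_SUPREMUM_ennreal[OF sa] by (simp add: sum_ennreal)
  also have "\<dots> = (\<Sum>\<^sub>\<infinity>i\<in>I. ennreal \<bar>h i\<bar>)"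
    by (rule nonneg_infsum_complete[symmetric]) simp
  finally show ?thesis .
qed (simp add: infsum_not_exists)

lemma SUP_mult_incseq_ennreal:
  fixes u v :: "nat \<Rightarrow> ennreal"
  assumes "incseq u" "incseq v"
  shows "(SUP k. u k) * (SUP j. v j) = (SUP n. u n * v n)"
proof -
  have "(SUP k. u k) * (SUP j. v j) = (SUP k. u k * (SUP j. v j))"
    by (rule SUP_mult_right_ennreal)
  also have "\<dots> = (SUP k. SUP j. u k * v j)" by (simp add: SUP_mult_left_ennreal)
  also have "\<dots> = (SUP n. u n * v n)"
  proof (rule antisym)
    have "u k * v j \<le> u (max k j) * v (max k j)" for k j
      using assms by (intro mult_mono) (auto simp: incseq_def)
    then show "(SUP k. SUP j. u k * v j) \<le> (SUP n. u n * v n)"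
      by (intro SUP_least) (rule SUP_upper2[OF UNIV_I])
    show "(SUP n. u n * v n) \<le> (SUP k. SUP j. u k * v j)"
      by (intro SUP_least) (rule SUP_upper2[OF UNIV_I], rule SUP_upper2[OF UNIV_I], rule order_refl)
  qed
  finally show ?thesis .
qed

lemma SUP_power_incseq_ennreal:
  fixes u :: "nat \<Rightarrow> ennreal"
  assumes "incseq u"
  shows "(SUP k. u k) ^ m = (SUP k. u k ^ m)"
proof (induction m)
  case (Suc m)
  have "incseq (\<lambda>k. u k ^ m)" using assms by (auto simp: incseq_def intro: power_mono)
  then show ?case using Suc SUP_mult_incseq_ennreal[OF assms] by simp
qed simp

lemma ennreal_add_power_le: "(a + b :: ennreal) ^ Suc n \<le> of_nat (Suc n) * a * (a + b) ^ n + b ^ Suc n"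
proof (induction n)
  case (Suc n)
  have "(a + b) ^ Suc (Suc n) \<le> (a + b) * (of_nat (Suc n) * a * (a + b) ^ n + b ^ Suc n)"
    using Suc.IH by (simp add: mult_left_mono)
  also have "\<dots> = of_nat (Suc n) * a * (a + b) ^ Suc n + a * b ^ Suc n + b ^ Suc (Suc n)"
    by (simp add: algebra_simps)
  also have "a * b ^ Suc n \<le> a * (a + b) ^ Suc n"
    by (intro mult_left_mono power_mono) auto
  finally have "(a + b) ^ Suc (Suc n)
      \<le> of_nat (Suc n) * a * (a + b) ^ Suc n + a * (a + b) ^ Suc n + b ^ Suc (Suc n)"
    by (simp add: add_mono)
  also have "\<dots> = of_nat (Suc (Suc n)) * a * (a + b) ^ Suc n + b ^ Suc (Suc n)"
    by (simp add: algebra_simps)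
  finally show ?case .
qed simp

lemma finite_total_preorder_has_least:
  assumes "finite T" "T \<noteq> {}"
    and "\<forall>t\<in>T. \<forall>s\<in>T. r t s \<or> r s t" "\<forall>t\<in>T. \<forall>s\<in>T. \<forall>u\<in>T. r t s \<longrightarrow> r s u \<longrightarrow> r t u"
  shows "\<exists>t0\<in>T. \<forall>s\<in>T. r t0 s"
  using assms
proof (induction T rule: finite_ne_induct)
  case (singleton x)
  then have "r x x" by blast
  then show ?case by simp
next
  case (insert x F)
  have tot: "\<And>t s. t \<in> insert x F \<Longrightarrow> s \<in> insert x F \<Longrightarrow> r t s \<or> r s t"
    using insert.prems(1) by blast
  have tr: "\<And>t s u. t \<in> insert x F \<Longrightarrow> s \<in> insert x F \<Longrightarrow> u \<in> insert x F \<Longrightarrow> r t s \<Longrightarrow> r s u \<Longrightarrow> r t u"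
    using insert.prems(2) by blast
  have "\<forall>t\<in>F. \<forall>s\<in>F. r t s \<or> r s t" "\<forall>t\<in>F. \<forall>s\<in>F. \<forall>u\<in>F. r t s \<longrightarrow> r s u \<longrightarrow> r t u"
    using tot tr by blast+
  then obtain t0 where t0: "t0 \<in> F" "\<forall>s\<in>F. r t0 s" using insert.IH by blast
  show ?case
  proof (cases "r x t0")
    case True
    have "r x s" if "s \<in> insert x F" for s
      using that tot[of x x] tr[of x t0 s] True t0 by auto
    then show ?thesis by (intro bexI[of _ x]) auto
  next
    case False
    then have "r t0 x" using tot[of x t0] t0 by auto
    then show ?thesis using t0 by (intro bexI[of _ t0]) auto
  qed
qed

text \<open>A discrete analogue of (\<integral> w)^(n+1) = (n+1) \<integral> w(t) (\<integral> w(s) [s \<ge> t])^n; peel off the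
  least element of the chain and induct.\<close>

lemma sum_power_le_chain:
  fixes w :: "'a \<Rightarrow> ennreal"
  assumes "finite T" "\<forall>t\<in>T. \<forall>s\<in>T. r t s \<or> r s t"
    "\<forall>t\<in>T. \<forall>s\<in>T. \<forall>u\<in>T. r t s \<longrightarrow> r s u \<longrightarrow> r t u"
  shows "(\<Sum>t\<in>T. w t) ^ Suc n \<le> of_nat (Suc n) * (\<Sum>t\<in>T. w t * (\<Sum>s\<in>{s\<in>T. r t s}. w s) ^ n)"
  using assms
proof (induction T rule: finite_remove_induct)
  case (remove T)
  obtain t0 where t0: "t0 \<in> T" "\<forall>s\<in>T. r t0 s"
    using finite_total_preorder_has_least[OF remove.hyps(1,2) remove.prems] by blast
  define T0 where "T0 = T - {t0}"
  define tail where "tail t = (\<Sum>s\<in>{s\<in>T. r t s}. w s) ^ n" for t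
  have "\<forall>t\<in>T0. \<forall>s\<in>T0. r t s \<or> r s t" "\<forall>t\<in>T0. \<forall>s\<in>T0. \<forall>u\<in>T0. r t s \<longrightarrow> r s u \<longrightarrow> r t u"
    using remove.prems unfolding T0_def by blast+
  then have IH: "(\<Sum>t\<in>T0. w t) ^ Suc n \<le> of_nat (Suc n) * (\<Sum>t\<in>T0. w t * (\<Sum>s\<in>{s\<in>T0. r t s}. w s) ^ n)"
    using remove.IH[OF t0(1)] unfolding T0_def by blast
  have "(\<Sum>t\<in>T0. w t * (\<Sum>s\<in>{s\<in>T0. r t s}. w s) ^ n) \<le> (\<Sum>t\<in>T0. w t * tail t)"
    unfolding tail_def T0_def using remove.hyps(1)
    by (intro mult_left_mono sum_mono power_mono sum_mono2) auto
  then have IH': "(\<Sum>t\<in>T0. w t) ^ Suc n \<le> of_nat (Suc n) * (\<Sum>t\<in>T0. w t * tail t)"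
    using IH by (meson mult_left_mono order_trans zero_le)
  have "tail t0 = (\<Sum>t\<in>T. w t) ^ n"
    unfolding tail_def using t0 by (metis (no_types, lifting) Collect_mem_eq Collect_cong)
  then have sum_tail: "(\<Sum>t\<in>T. w t * tail t) = w t0 * (\<Sum>t\<in>T. w t) ^ n + (\<Sum>t\<in>T0. w t * tail t)"
    unfolding T0_def using sum.remove[OF remove.hyps(1) t0(1), of "\<lambda>t. w t * tail t"] by simp
  have "(\<Sum>t\<in>T. w t) = w t0 + (\<Sum>t\<in>T0. w t)"
    unfolding T0_def using remove.hyps(1) t0(1) by (rule sum.remove)
  then have "(\<Sum>t\<in>T. w t) ^ Suc n \<le> of_nat (Suc n) * w t0 * (\<Sum>t\<in>T. w t) ^ n + (\<Sum>t\<in>T0. w t) ^ Suc n"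
    using ennreal_add_power_le[of "w t0" "\<Sum>t\<in>T0. w t" n] by simp
  also have "\<dots> \<le> of_nat (Suc n) * w t0 * (\<Sum>t\<in>T. w t) ^ n + of_nat (Suc n) * (\<Sum>t\<in>T0. w t * tail t)"
    using IH' by (rule add_left_mono)
  also have "\<dots> = of_nat (Suc n) * (\<Sum>t\<in>T. w t * tail t)"
    unfolding sum_tail by (simp only: distrib_left mult.assoc)
  finally have "(\<Sum>t\<in>T. w t) ^ Suc n \<le> of_nat (Suc n) * (\<Sum>t\<in>T. w t * tail t)" .
  then show ?case by (simp only: tail_def)
qed (simp only: sum.empty power_0_Suc zero_le)

lemma powr_sum3_le:
  fixes a b c p :: real
  assumes "0 \<le> a" "0 \<le> b" "0 \<le> c" "0 \<le> p"
  shows "(a + b + c) powr p \<le> 3 powr p * (a powr p + b powr p + c powr p)"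
proof -
  define m where "m = max a (max b c)"
  have "(a + b + c) powr p \<le> (3 * m) powr p"
    using assms unfolding m_def by (intro powr_mono2) auto
  also have "\<dots> = 3 powr p * m powr p" using assms unfolding m_def by (simp add: powr_mult)
  also have "m powr p \<le> a powr p + b powr p + c powr p"
    unfolding m_def by (auto simp: max_def add_increasing add_increasing2)
  finally show ?thesis by (simp add: mult_left_mono)
qed

lemma powr_le_split_powers:
  fixes t lam p :: real
  assumes t: "0 \<le> t" and lam: "0 < lam" and np: "real n \<le> p" "p < real n + 1"
  shows "t powr p \<le> lam powr (p - n) * t ^ n + lam powr (p - n - 1) * t ^ Suc n"
proof (cases "t = 0")
  case False
  then have tp: "0 < t" using t by simp
  show ?thesis
  proof (cases "t \<le> lam")
    case True
    have "t powr p = t ^ n * t powr (p - n)"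
      using tp by (simp add: powr_add[symmetric] powr_realpow[symmetric])
    also have "\<dots> \<le> t ^ n * lam powr (p - n)"
      using True np t by (intro mult_left_mono powr_mono2) auto
    finally show ?thesis using t by (simp add: mult.commute add_increasing2)
  next
    case False
    have "t powr p = t powr (real (Suc n)) * t powr (p - n - 1)" by (simp add: powr_add[symmetric])
    also have "\<dots> = t ^ Suc n * t powr (p - n - 1)" using tp by (simp only: powr_realpow)
    also have "\<dots> \<le> t ^ Suc n * lam powr (p - n - 1)"
      using False np lam by (intro mult_left_mono powr_mono2') auto
    finally show ?thesis using t by (simp add: mult.commute add_increasing)
  qed
qed simp

lemma powr_le_mult_of_le:
  fixes y lam p :: real
  assumes "0 \<le> y" "y \<le> lam" "1 \<le> p"
  shows "y powr p \<le> lam powr (p - 1) * y"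
proof (cases "y = 0")
  case False
  have "y powr p = y powr ((p - 1) + 1)" by simp
  also have "\<dots> = y powr (p - 1) * y powr 1" by (rule powr_add)
  also have "\<dots> = y powr (p - 1) * y" using assms \<open>y \<noteq> 0\<close> by simp
  also have "\<dots> \<le> lam powr (p - 1) * y" using assms by (intro mult_right_mono powr_mono2) auto
  finally show ?thesis .
qed simp

lemma nn_integral_indicator_disjoint_Union:
  assumes "countable F" "disjoint F" "F \<subseteq> sets M" "g \<in> borel_measurable M"
  shows "(\<integral>\<^sup>+x. g x * indicator (\<Union>F) x \<partial>M) = (\<Sum>\<^sub>\<infinity>Q\<in>F. \<integral>\<^sup>+x. g x * indicator Q x \<partial>M)"
proof -
  have "(\<integral>\<^sup>+x. g x * indicator (\<Union>F) x \<partial>M) = (\<integral>\<^sup>+x. (\<Sum>\<^sub>\<infinity>Q\<in>F. g x * indicator Q x) \<partial>M)"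
    using infsum_indicator_disjoint_ennreal[OF assms(2)] by simp
  also have "\<dots> = (\<Sum>\<^sub>\<infinity>Q\<in>F. \<integral>\<^sup>+x. g x * indicator Q x \<partial>M)"
    using assms by (intro nn_integral_infsum) auto
  finally show ?thesis .
qed

lemma nn_integral_abs_add3_powr_le:
  fixes a b c :: "'a \<Rightarrow> real"
  assumes p: "0 \<le> p" and meas: "u \<in> borel_measurable M" "v \<in> borel_measurable M" "w \<in> borel_measurable M"
    and bounds: "AE x in M. ennreal (\<bar>a x\<bar> powr p) \<le> u x" "AE x in M. ennreal (\<bar>b x\<bar> powr p) \<le> v x"
      "AE x in M. ennreal (\<bar>c x\<bar> powr p) \<le> w x"
  shows "(\<integral>\<^sup>+x. ennreal (\<bar>a x + b x + c x\<bar> powr p) \<partial>M)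
    \<le> ennreal (3 powr p) * ((\<integral>\<^sup>+x. u x \<partial>M) + (\<integral>\<^sup>+x. v x \<partial>M) + (\<integral>\<^sup>+x. w x \<partial>M))"
proof -
  have "AE x in M. ennreal (\<bar>a x + b x + c x\<bar> powr p) \<le> ennreal (3 powr p) * (u x + v x + w x)"
    using bounds
  proof eventually_elim
    case (elim x)
    have "\<bar>a x + b x + c x\<bar> powr p \<le> (\<bar>a x\<bar> + \<bar>b x\<bar> + \<bar>c x\<bar>) powr p"
      using p by (intro powr_mono2) auto
    also have "\<dots> \<le> 3 powr p * (\<bar>a x\<bar> powr p + \<bar>b x\<bar> powr p + \<bar>c x\<bar> powr p)"
      using p by (intro powr_sum3_le) auto
    finally have "ennreal (\<bar>a x + b x + c x\<bar> powr p)
        \<le> ennreal (3 powr p * (\<bar>a x\<bar> powr p + \<bar>b x\<bar> powr p + \<bar>c x\<bar> powr p))"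
      by (rule ennreal_leI)
    also have "\<dots> = ennreal (3 powr p) * (ennreal (\<bar>a x\<bar> powr p) + ennreal (\<bar>b x\<bar> powr p) + ennreal (\<bar>c x\<bar> powr p))"
      by (simp add: ennreal_mult ennreal_plus)
    also have "\<dots> \<le> ennreal (3 powr p) * (u x + v x + w x)"
      using elim by (intro mult_left_mono add_mono) auto
    finally show ?case .
  qed
  then have "(\<integral>\<^sup>+x. ennreal (\<bar>a x + b x + c x\<bar> powr p) \<partial>M) \<le> (\<integral>\<^sup>+x. ennreal (3 powr p) * (u x + v x + w x) \<partial>M)"
    by (rule nn_integral_mono_AE)
  also have "\<dots> = ennreal (3 powr p) * ((\<integral>\<^sup>+x. u x \<partial>M) + (\<integral>\<^sup>+x. v x \<partial>M) + (\<integral>\<^sup>+x. w x \<partial>M))"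
    using meas by (simp add: nn_integral_cmult nn_integral_add)
  finally show ?thesis .
qed

lemma ennreal_add_mult_distrib: "0 \<le> a \<Longrightarrow> 0 \<le> b \<Longrightarrow> ennreal a * c + ennreal b * c = ennreal (a + b) * c"
  by (simp add: ennreal_plus distrib_right)

lemma powr_diff_mult_power: "0 < x \<Longrightarrow> x powr (q - real m) * x ^ m = x powr q"
  by (simp add: powr_realpow[symmetric] powr_add[symmetric])

section \<open>Outer approximation by countable unions of generators\<close>

definition countable_unions :: "'a set set \<Rightarrow> 'a set set" where
  "countable_unions G = {\<Union>F | F. countable F \<and> F \<subseteq> G}"

definition outer_approximable :: "'a measure \<Rightarrow> 'a set set \<Rightarrow> 'a set \<Rightarrow> bool" where
  "outer_approximable M G B \<longleftrightarrow>
     (\<forall>e>0. \<exists>U\<in>countable_unions G. B \<subseteq> U \<and> emeasure M (U - B) \<le> ennreal e)"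

lemma countable_unions_sets: "G \<subseteq> sets M \<Longrightarrow> U \<in> countable_unions G \<Longrightarrow> U \<in> sets M"
  unfolding countable_unions_def by (auto intro: sets.countable_Union)

lemma countable_unions_single: "Q \<in> G \<Longrightarrow> Q \<in> countable_unions G"
  unfolding countable_unions_def by (intro CollectI exI[of _ "{Q}"]) auto

lemma countable_unions_empty: "{} \<in> countable_unions G"
  unfolding countable_unions_def by (intro CollectI exI[of _ "{}"]) auto

lemma countable_unions_UN:
  assumes "\<And>i::nat. U i \<in> countable_unions G"
  shows "(\<Union>i. U i) \<in> countable_unions G"
proof -
  have "\<forall>i. \<exists>F. U i = \<Union>F \<and> countable F \<and> F \<subseteq> G"
    using assms unfolding countable_unions_def by blast
  from choice[OF this] obtain F where F: "\<forall>i. U i = \<Union>(F i) \<and> countable (F i) \<and> F i \<subseteq> G"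
    ..
  then have "(\<Union>i. U i) = \<Union>(\<Union>i. F i)" "countable (\<Union>i. F i)" "(\<Union>i. F i) \<subseteq> G"
    by auto
  then show ?thesis unfolding countable_unions_def by blast
qed

lemma countable_unions_Int:
  assumes G: "Int_stable G" and U: "U \<in> countable_unions G" and V: "V \<in> countable_unions G"
  shows "U \<inter> V \<in> countable_unions G"
proof -
  obtain F F' where F: "U = \<Union>F" "countable F" "F \<subseteq> G"
    and F': "V = \<Union>F'" "countable F'" "F' \<subseteq> G"
    using U V unfolding countable_unions_def by blast
  let ?H = "(\<lambda>(Q, Q'). Q \<inter> Q') ` (F \<times> F')"
  have "U \<inter> V = \<Union>?H" "countable ?H" using F F' by auto
  moreover have "?H \<subseteq> G" using G F(3) F'(3) by (auto simp: Int_stable_def)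
  ultimately show ?thesis unfolding countable_unions_def by blast
qed

lemma outer_approximable_UN:
  assumes G: "G \<subseteq> sets M"
    and A: "\<And>i::nat. outer_approximable M G (A i)" "\<And>i. A i \<in> sets M"
  shows "outer_approximable M G (\<Union>i. A i)"
  unfolding outer_approximable_def
proof (intro allI impI)
  fix e :: real assume e: "0 < e"
  let ?e = "\<lambda>i. e * (1/2) ^ Suc i"
  have "\<exists>U. U \<in> countable_unions G \<and> A i \<subseteq> U \<and> emeasure M (U - A i) \<le> ennreal (?e i)" for i
  proof -
    have "0 < ?e i" using e by simp
    then show ?thesis using A(1)[of i] unfolding outer_approximable_def by blast
  qed
  then obtain U where U: "\<And>i. U i \<in> countable_unions G" "\<And>i. A i \<subseteq> U i"
    "\<And>i. emeasure M (U i - A i) \<le> ennreal (?e i)"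
    by metis
  have Us: "U i - A i \<in> sets M" for i using countable_unions_sets[OF G U(1)] A(2) by blast
  have "emeasure M ((\<Union>i. U i) - (\<Union>i. A i)) \<le> emeasure M (\<Union>i. U i - A i)"
    using Us by (intro emeasure_mono) auto
  also have "\<dots> \<le> (\<Sum>i. emeasure M (U i - A i))"
    using Us by (intro emeasure_subadditive_countably) auto
  also have "\<dots> \<le> (\<Sum>i. ennreal (?e i))"
    using U(3) by (intro suminf_le) auto
  also have "\<dots> = ennreal (e * 1)"
    using e by (intro suminf_ennreal_eq sums_mult power_half_series) auto
  finally show "\<exists>U\<in>countable_unions G. (\<Union>i. A i) \<subseteq> U \<and> emeasure M (U - (\<Union>i. A i)) \<le> ennreal e"
    using countable_unions_UN[OF U(1)] U(2) by (intro bexI[of _ "\<Union>i. U i"]) auto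
qed

lemma countable_unions_Int_INT:
  fixes V :: "nat \<Rightarrow> 'a set"
  assumes "Int_stable G" "\<Omega> \<in> countable_unions G" "\<And>i. V i \<in> countable_unions G"
  shows "\<Omega> \<inter> (\<Inter>i\<in>{..<n}. V i) \<in> countable_unions G"
proof (induction n)
  case (Suc n)
  have "\<Omega> \<inter> (\<Inter>i\<in>{..<Suc n}. V i) = (\<Omega> \<inter> (\<Inter>i\<in>{..<n}. V i)) \<inter> V n"
    by (auto simp: lessThan_Suc)
  then show ?case using countable_unions_Int[OF assms(1) Suc.IH assms(3)] by simp
qed (simp add: assms(2))

lemma emeasure_disjoint_tail_tendsto_0:
  assumes A: "disjoint_family A" "\<And>i::nat. A i \<in> sets M" "\<And>i. A i \<subseteq> \<Omega>"
    and \<Omega>: "\<Omega> \<in> sets M" "emeasure M \<Omega> < \<infinity>"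
  shows "(\<lambda>N. emeasure M (\<Union>i\<in>{N..}. A i)) \<longlonglongrightarrow> 0"
proof -
  have "(\<lambda>N. emeasure M (\<Union>i\<in>{N..}. A i)) \<longlonglongrightarrow> emeasure M (\<Inter>N. \<Union>i\<in>{N..}. A i)"
  proof (intro Lim_emeasure_decseq)
    show "range (\<lambda>N. \<Union>i\<in>{N..}. A i) \<subseteq> sets M" using A(2) by auto
    show "decseq (\<lambda>N. \<Union>i\<in>{N..}. A i)"
      unfolding decseq_def by (intro allI impI UN_mono) auto
    have "emeasure M (\<Union>i\<in>{N..}. A i) \<le> emeasure M \<Omega>" for N
      using A(2,3) \<Omega>(1) by (intro emeasure_mono) auto
    then show "emeasure M (\<Union>i\<in>{N..}. A i) \<noteq> \<infinity>" for N
      using \<Omega>(2) by (metis order.strict_trans1 order.irrefl)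
  qed
  moreover have "(\<Inter>N. \<Union>i\<in>{N..}. A i) = {}"
  proof -
    have False if x: "\<And>N. x \<in> (\<Union>i\<in>{N..}. A i)" for x
    proof -
      obtain i where i: "x \<in> A i" using x[of 0] by auto
      obtain j where j: "j \<ge> Suc i" "x \<in> A j" using x[of "Suc i"] by auto
      have "A i \<inter> A j = {}" using A(1) j(1) unfolding disjoint_family_on_def by auto
      then show False using i j by blast
    qed
    then show ?thesis by blast
  qed
  ultimately show ?thesis by simp
qed

text \<open>Only the first N pieces are approximated; the tail \<Union>i\<ge>N. A i is paid for by its measure.\<close>

lemma approximation_Diff_UN_le:
  fixes N :: nat
  assumes G: "Int_stable G" "G \<subseteq> sets M" "\<Omega> \<in> countable_unions G"
    and A: "\<And>i::nat. A i \<in> sets M"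
    and V: "\<And>i. V i \<in> countable_unions G" "\<And>i. \<Omega> - A i \<subseteq> V i"
      "\<And>i. emeasure M (V i - (\<Omega> - A i)) \<le> ennreal c"
    and c: "0 \<le> c"
  defines "W \<equiv> \<Omega> \<inter> (\<Inter>i\<in>{..<N}. V i)"
  shows "W \<in> countable_unions G" "\<Omega> - (\<Union>i. A i) \<subseteq> W"
    and "emeasure M (W - (\<Omega> - (\<Union>i. A i))) \<le> ennreal (real N * c) + emeasure M (\<Union>i\<in>{N..}. A i)"
proof -
  show "W \<in> countable_unions G"
    unfolding W_def using countable_unions_Int_INT[where V = V, OF G(1,3) V(1)] .
  show "\<Omega> - (\<Union>i. A i) \<subseteq> W" unfolding W_def using V(2) by blast
  have \<Omega>s: "\<Omega> \<in> sets M" using countable_unions_sets[OF G(2,3)] .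
  have Vs: "V i - (\<Omega> - A i) \<in> sets M" for i
    using countable_unions_sets[OF G(2) V(1)] A \<Omega>s by blast
  have Ts: "(\<Union>i\<in>{N..}. A i) \<in> sets M" using A by auto
  have "W - (\<Omega> - (\<Union>i. A i)) \<subseteq> (\<Union>i\<in>{..<N}. V i - (\<Omega> - A i)) \<union> (\<Union>i\<in>{N..}. A i)"
    unfolding W_def by auto (meson atLeast_iff lessThan_iff not_le)
  then have "emeasure M (W - (\<Omega> - (\<Union>i. A i)))
      \<le> emeasure M ((\<Union>i\<in>{..<N}. V i - (\<Omega> - A i)) \<union> (\<Union>i\<in>{N..}. A i))"
    using Vs Ts by (intro emeasure_mono) auto
  also have "\<dots> \<le> emeasure M (\<Union>i\<in>{..<N}. V i - (\<Omega> - A i)) + emeasure M (\<Union>i\<in>{N..}. A i)"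
    using Vs Ts by (intro emeasure_subadditive) auto
  also have "\<dots> \<le> (\<Sum>i\<in>{..<N}. emeasure M (V i - (\<Omega> - A i))) + emeasure M (\<Union>i\<in>{N..}. A i)"
    using Vs by (intro add_right_mono emeasure_subadditive_finite) auto
  also have "(\<Sum>i\<in>{..<N}. emeasure M (V i - (\<Omega> - A i))) \<le> (\<Sum>i\<in>{..<N}. ennreal c)"
    using V(3) by (intro sum_mono) auto
  also have "\<dots> = ennreal (real N * c)"
    using c by (simp add: ennreal_of_nat_eq_real_of_nat ennreal_mult)
  finally show "emeasure M (W - (\<Omega> - (\<Union>i. A i))) \<le> ennreal (real N * c) + emeasure M (\<Union>i\<in>{N..}. A i)"
    by (simp add: add_right_mono)
qed

lemma outer_approximable_Diff_UN:
  assumes G: "Int_stable G" "G \<subseteq> sets M" and \<Omega>: "\<Omega> \<in> countable_unions G" "emeasure M \<Omega> < \<infinity>"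
    and A: "\<And>i::nat. outer_approximable M G (\<Omega> - A i)" "\<And>i. A i \<in> sets M" "\<And>i. A i \<subseteq> \<Omega>"
      "disjoint_family A"
  shows "outer_approximable M G (\<Omega> - (\<Union>i. A i))"
  unfolding outer_approximable_def
proof (intro allI impI)
  fix e :: real assume e: "0 < e"
  have "eventually (\<lambda>N. emeasure M (\<Union>i\<in>{N..}. A i) < ennreal (e / 2)) sequentially"
    using emeasure_disjoint_tail_tendsto_0[OF A(4,2,3) countable_unions_sets[OF G(2) \<Omega>(1)] \<Omega>(2)] e
    by (intro order_tendstoD(2)) auto
  then obtain N where N: "emeasure M (\<Union>i\<in>{N..}. A i) < ennreal (e / 2)"
    unfolding eventually_sequentially by blast
  define c where "c = e / (2 * (real N + 1))"
  have c: "0 < c" using e unfolding c_def by simp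
  have cN: "real N * c \<le> e / 2" using e unfolding c_def by (simp add: field_simps)
  have "\<exists>V. V \<in> countable_unions G \<and> \<Omega> - A i \<subseteq> V \<and> emeasure M (V - (\<Omega> - A i)) \<le> ennreal c" for i
    using A(1)[of i] c unfolding outer_approximable_def by blast
  then obtain V where V: "\<And>i. V i \<in> countable_unions G" "\<And>i. \<Omega> - A i \<subseteq> V i"
    "\<And>i. emeasure M (V i - (\<Omega> - A i)) \<le> ennreal c"
    by metis
  note W = approximation_Diff_UN_le[where N = N, OF G \<Omega>(1) A(2) V less_imp_le[OF c]]
  have "ennreal (real N * c) + emeasure M (\<Union>i\<in>{N..}. A i) \<le> ennreal (e / 2) + ennreal (e / 2)"
    using cN N by (intro add_mono ennreal_leI) auto
  also have "\<dots> = ennreal e" using e by (simp flip: ennreal_plus)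
  finally show "\<exists>U\<in>countable_unions G. \<Omega> - (\<Union>i. A i) \<subseteq> U \<and> emeasure M (U - (\<Omega> - (\<Union>i. A i))) \<le> ennreal e"
    using W by (meson order_trans)
qed

theorem outer_approximable_sigma_sets:
  assumes G: "Int_stable G" "G \<subseteq> Pow \<Omega>" "G \<subseteq> sets M"
    and \<Omega>: "\<Omega> \<in> countable_unions G" "emeasure M \<Omega> < \<infinity>"
    and compl: "\<And>Q. Q \<in> G \<Longrightarrow> \<Omega> - Q \<in> countable_unions G"
    and B: "B \<in> sigma_sets \<Omega> G"
  shows "outer_approximable M G B"
proof -
  have approx_unions: "outer_approximable M G U" if "U \<in> countable_unions G" for U
    using that unfolding outer_approximable_def by auto
  have sets: "A \<in> sets M" if "A \<in> sigma_sets \<Omega> G" for A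
    using that G(3) countable_unions_sets[OF G(3) \<Omega>(1)]
    by induction (auto intro: sets.countable_UN[of _ UNIV, simplified])
  from G(1,2) B have "outer_approximable M G B \<and> outer_approximable M G (\<Omega> - B)"
  proof (induction rule: sigma_sets_induct_disjoint)
    case (basic A)
    then show ?case using approx_unions countable_unions_single compl by blast
  next
    case empty
    then show ?case using approx_unions[OF countable_unions_empty] approx_unions[OF \<Omega>(1)] by simp
  next
    case (compl A)
    then have "\<Omega> - (\<Omega> - A) = A" using sigma_sets_into_sp[OF G(2)] by blast
    then show ?case using compl.IH by simp
  next
    case (union A)
    have "A i \<in> sets M" "A i \<subseteq> \<Omega>" for i
      using union.hyps(2) sets sigma_sets_into_sp[OF G(2)] by blast+
    then show ?case
      using outer_approximable_UN[OF G(3)] outer_approximable_Diff_UN[OF G(1,3) \<Omega>] union.IH union.hyps(1)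
      by blast
  qed
  then show ?thesis ..
qed

section \<open>Dyadic cubes\<close>

abbreviation Rd :: "nat \<Rightarrow> (nat \<Rightarrow> real) set" where
  "Rd d \<equiv> {..<d} \<rightarrow>\<^sub>E (UNIV :: real set)"

definition dcube_at :: "nat \<Rightarrow> int \<Rightarrow> (nat \<Rightarrow> real) \<Rightarrow> (nat \<Rightarrow> real) set" where
  "dcube_at d k x = dcube d k (\<lambda>i. \<lfloor>2 powr real_of_int k * x i\<rfloor>)"

lemma dyadic_interval_iff_floor:
  "(2 powr (- real_of_int k) * real_of_int m \<le> y \<and> y < 2 powr (- real_of_int k) * (real_of_int m + 1))
     \<longleftrightarrow> m = \<lfloor>2 powr real_of_int k * y\<rfloor>"
proof -
  have inv: "2 powr real_of_int k * 2 powr (- real_of_int k) = 1"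
    by (simp add: powr_add[symmetric])
  have "2 powr (- real_of_int k) * real_of_int m \<le> y \<longleftrightarrow> real_of_int m \<le> 2 powr real_of_int k * y"
    using mult_le_cancel_left_pos[of "2 powr real_of_int k" "2 powr (- real_of_int k) * real_of_int m" y]
    by (simp add: mult.assoc[symmetric] inv)
  moreover have "y < 2 powr (- real_of_int k) * (real_of_int m + 1) \<longleftrightarrow> 2 powr real_of_int k * y < real_of_int m + 1"
    using mult_less_cancel_left_pos[of "2 powr real_of_int k" y "2 powr (- real_of_int k) * (real_of_int m + 1)"]
    by (simp add: mult.assoc[symmetric] inv)
  ultimately show ?thesis using floor_eq_iff[of "2 powr real_of_int k * y" m] by auto
qed

lemma mem_dcube_iff: "x \<in> dcube d k m \<longleftrightarrow> x \<in> Rd d \<and> (\<forall>i<d. m i = \<lfloor>2 powr real_of_int k * x i\<rfloor>)"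
  unfolding dcube_def using dyadic_interval_iff_floor by blast

lemma mem_dcube_at:
  "y \<in> dcube_at d k x \<longleftrightarrow> y \<in> Rd d \<and> (\<forall>i<d. \<lfloor>2 powr real_of_int k * y i\<rfloor> = \<lfloor>2 powr real_of_int k * x i\<rfloor>)"
  unfolding dcube_at_def mem_dcube_iff by auto

lemma dcube_at_self: "x \<in> Rd d \<Longrightarrow> x \<in> dcube_at d k x"
  by (simp add: mem_dcube_at)

lemma dcube_eq_dcube_at: "x \<in> dcube d k m \<Longrightarrow> dcube d k m = dcube_at d k x"
  unfolding mem_dcube_iff by (auto simp: mem_dcube_at mem_dcube_iff)

lemma dcube_at_eq: "y \<in> dcube_at d k x \<Longrightarrow> dcube_at d k y = dcube_at d k x"
  unfolding mem_dcube_at by (auto simp: mem_dcube_at)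

lemma dcube_nonempty: "dcube d k m \<noteq> {}"
proof -
  have "(\<lambda>i\<in>{..<d}. 2 powr (- real_of_int k) * real_of_int (m i)) \<in> dcube d k m"
    unfolding dcube_def by auto
  then show ?thesis by blast
qed

lemma floor_powr_div:
  assumes "k \<le> j"
  shows "\<lfloor>2 powr real_of_int k * y\<rfloor> = \<lfloor>2 powr real_of_int j * y\<rfloor> div 2 ^ nat (j - k)"
proof -
  have "real_of_int ((2::int) ^ nat (j - k)) = 2 powr real_of_int (j - k)"
    using assms by (simp add: powr_realpow[symmetric])
  moreover have "2 powr real_of_int j = 2 powr real_of_int k * 2 powr real_of_int (j - k)"
    by (simp add: powr_add[symmetric])
  ultimately have "2 powr real_of_int k * y = (2 powr real_of_int j * y) / real_of_int ((2::int) ^ nat (j - k))"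
    by simp
  then show ?thesis
    using floor_divide_real_eq_div[of "(2::int) ^ nat (j - k)" "2 powr real_of_int j * y"] by simp
qed

lemma dcube_at_antimono: "k \<le> j \<Longrightarrow> dcube_at d j x \<subseteq> dcube_at d k x"
  unfolding mem_dcube_at subset_iff using floor_powr_div by metis

text \<open>The midpoint of the k-cube along the first coordinate leaves the j-cube.\<close>

lemma dcube_at_neq:
  assumes d: "0 < d" and x: "x \<in> Rd d" and kj: "k < j"
  shows "dcube_at d k x \<noteq> dcube_at d j x"
proof
  assume eq: "dcube_at d k x = dcube_at d j x"
  define n where "n = \<lfloor>2 powr real_of_int k * x 0\<rfloor>"
  define c where "c = 2 powr (- real_of_int k) * real_of_int n"
  define z1 where "z1 = x(0 := c)"
  define z2 where "z2 = x(0 := c + 2 powr (- real_of_int k) / 2)"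
  have inv: "2 powr real_of_int k * 2 powr (- real_of_int k) = 1"
    by (simp add: powr_add[symmetric])
  have c1: "2 powr real_of_int k * c = real_of_int n"
    unfolding c_def by (simp add: mult.assoc[symmetric] inv)
  have c2: "2 powr real_of_int k * (c + 2 powr (- real_of_int k) / 2) = real_of_int n + 1/2"
    unfolding c_def by (simp add: distrib_left mult.assoc[symmetric] inv)
  have "\<lfloor>real_of_int n + 1/2\<rfloor> = n" by (simp add: floor_eq_iff)
  then have "z1 \<in> dcube_at d k x" "z2 \<in> dcube_at d k x"
    using x d unfolding mem_dcube_at z1_def z2_def by (auto simp: c1 c2 n_def PiE_def extensional_def)
  then have "z1 \<in> dcube_at d j x" "z2 \<in> dcube_at d j x" using eq by auto
  then have z12: "\<lfloor>2 powr real_of_int j * z1 0\<rfloor> = \<lfloor>2 powr real_of_int j * z2 0\<rfloor>"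
    using d unfolding mem_dcube_at by auto
  define e where "e = 2 powr real_of_int (j - k)"
  have "2 powr 1 \<le> e"
    unfolding e_def using kj by (intro powr_mono) auto
  then have e2: "2 \<le> e" by simp
  have jk: "2 powr real_of_int j = e * 2 powr real_of_int k"
    unfolding e_def by (simp add: powr_add[symmetric])
  have a1: "2 powr real_of_int j * z1 0 = e * real_of_int n"
    unfolding z1_def using c1 by (simp add: jk mult.assoc)
  have "2 powr real_of_int j * z2 0 = e * (2 powr real_of_int k * c) + e * (2 powr real_of_int k * 2 powr (- real_of_int k)) / 2"
    unfolding z2_def jk by (simp add: algebra_simps)
  then have a2: "2 powr real_of_int j * z2 0 = e * real_of_int n + e / 2"
    by (simp only: c1 inv mult_1_right)
  have "\<lfloor>e * real_of_int n + e / 2\<rfloor> \<ge> \<lfloor>e * real_of_int n + 1\<rfloor>"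
    using e2 by (intro floor_mono) simp
  then show False using z12 a1 a2 by simp
qed

lemma dcube_at_subset_iff:
  assumes "0 < d" "x \<in> Rd d"
  shows "dcube_at d j x \<subseteq> dcube_at d k x \<longleftrightarrow> k \<le> j"
proof
  assume sub: "dcube_at d j x \<subseteq> dcube_at d k x"
  show "k \<le> j"
  proof (rule ccontr)
    assume "\<not> k \<le> j"
    then show False
      using sub dcube_at_antimono[of j k d x] dcube_at_neq[OF assms, of j k] by auto
  qed
qed (rule dcube_at_antimono)

lemma dyadic_iff_dcube_at: "Q \<in> dyadic d \<longleftrightarrow> (\<exists>k x. x \<in> Rd d \<and> Q = dcube_at d k x)"
proof
  assume "Q \<in> dyadic d"
  then obtain k m where Q: "Q = dcube d k m" unfolding dyadic_def by auto
  obtain x where x: "x \<in> dcube d k m" using dcube_nonempty by blast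
  then show "\<exists>k x. x \<in> Rd d \<and> Q = dcube_at d k x"
    using Q dcube_eq_dcube_at[OF x] mem_dcube_iff by blast
qed (auto simp: dyadic_def dcube_at_def)

lemma dcube_at_dyadic: "x \<in> Rd d \<Longrightarrow> dcube_at d k x \<in> dyadic d"
  using dyadic_iff_dcube_at by blast

lemma dyadic_subset_Rd: "Q \<in> dyadic d \<Longrightarrow> Q \<subseteq> Rd d"
  unfolding dyadic_def dcube_def by auto

lemma dyadic_eq_dcube_at: "Q \<in> dyadic d \<Longrightarrow> z \<in> Q \<Longrightarrow> \<exists>k. Q = dcube_at d k z"
  unfolding dyadic_iff_dcube_at using dcube_at_eq by blast

lemma dyadic_nested_or_disjoint:
  assumes "Q \<in> dyadic d" "R \<in> dyadic d"
  shows "Q \<subseteq> R \<or> R \<subseteq> Q \<or> Q \<inter> R = {}"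
proof (cases "Q \<inter> R = {}")
  case False
  then obtain z where z: "z \<in> Q" "z \<in> R" by blast
  obtain k j where "Q = dcube_at d k z" "R = dcube_at d j z"
    using dyadic_eq_dcube_at assms z by metis
  then show ?thesis using dcube_at_antimono[of k j d z] dcube_at_antimono[of j k d z] by (cases "k \<le> j") auto
qed simp

lemma dparent_dcube_at:
  assumes d: "0 < d" and x: "x \<in> Rd d"
  shows "dparent d (dcube_at d k x) = dcube_at d (k - 1) x"
  unfolding dparent_def
proof (rule the_equality)
  have "\<lfloor>2 powr real_of_int (k - 1) * x i\<rfloor> = \<lfloor>2 powr real_of_int k * x i\<rfloor> div 2" for i
    using floor_powr_div[of "k - 1" k "x i"] by simp
  then show "\<exists>k' m. dcube_at d k x = dcube d k' m \<and> dcube_at d (k - 1) x = dcube d (k' - 1) (\<lambda>i. m i div 2)"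
    unfolding dcube_at_def by auto
next
  fix R assume "\<exists>k' m. dcube_at d k x = dcube d k' m \<and> R = dcube d (k' - 1) (\<lambda>i. m i div 2)"
  then obtain k' m where e: "dcube_at d k x = dcube d k' m" and R: "R = dcube d (k' - 1) (\<lambda>i. m i div 2)"
    by blast
  have xm: "x \<in> dcube d k' m" using e dcube_at_self[OF x, of k] by simp
  then have "dcube_at d k x = dcube_at d k' x" using e dcube_eq_dcube_at by simp
  then have kk: "k' = k" using dcube_at_subset_iff[OF d x] by (metis order.antisym order_refl)
  then have "\<forall>i<d. m i div 2 = \<lfloor>2 powr real_of_int (k - 1) * x i\<rfloor>"
    using xm floor_powr_div[of "k - 1" k] by (simp add: mem_dcube_iff)
  then have "x \<in> R" using x R kk mem_dcube_iff by auto
  then show "R = dcube_at d (k - 1) x" using R dcube_eq_dcube_at kk by simp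
qed

lemma
  assumes "0 < d" "Q \<in> dyadic d"
  shows dparent_dyadic: "dparent d Q \<in> dyadic d"
    and dyadic_psubset_dparent: "Q \<subset> dparent d Q"
proof -
  obtain k x where x: "x \<in> Rd d" and Q: "Q = dcube_at d k x"
    using assms(2) unfolding dyadic_iff_dcube_at by blast
  show "dparent d Q \<in> dyadic d"
    unfolding Q dparent_dcube_at[OF assms(1) x] by (rule dcube_at_dyadic[OF x])
  have "dcube_at d k x \<subseteq> dcube_at d (k - 1) x" by (rule dcube_at_antimono) simp
  moreover have "dcube_at d (k - 1) x \<noteq> dcube_at d k x"
    using dcube_at_neq[OF assms(1) x, of "k - 1" k] by simp
  ultimately have "dcube_at d k x \<subset> dcube_at d (k - 1) x" by blast
  then show "Q \<subset> dparent d Q"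
    unfolding Q dparent_dcube_at[OF assms(1) x] .
qed

lemma finite_dyadic_between:
  assumes d: "0 < d" and Q: "Q \<in> dyadic d" and R: "R \<in> dyadic d" and QR: "Q \<subseteq> R"
  shows "finite {Q' \<in> dyadic d. Q \<subseteq> Q' \<and> Q' \<subseteq> R}"
proof -
  obtain k m where "Q = dcube d k m" using Q unfolding dyadic_def by blast
  then obtain z where z: "z \<in> Q" using dcube_nonempty[of d k m] by blast
  have zS: "z \<in> Rd d" using z Q dyadic_subset_Rd by blast
  obtain k where k: "Q = dcube_at d k z" using dyadic_eq_dcube_at[OF Q z] by blast
  obtain j where j: "R = dcube_at d j z" using dyadic_eq_dcube_at[OF R] z QR by blast
  have "{Q' \<in> dyadic d. Q \<subseteq> Q' \<and> Q' \<subseteq> R} \<subseteq> (\<lambda>i. dcube_at d i z) ` {j..k}"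
  proof
    fix Q' assume Q': "Q' \<in> {Q' \<in> dyadic d. Q \<subseteq> Q' \<and> Q' \<subseteq> R}"
    then obtain i where i: "Q' = dcube_at d i z" using dyadic_eq_dcube_at z by blast
    then show "Q' \<in> (\<lambda>i. dcube_at d i z) ` {j..k}"
      using Q' k j dcube_at_subset_iff[OF d zS] by auto
  qed
  then show ?thesis by (rule finite_subset) simp
qed

lemma countable_dyadic: "countable (dyadic d)"
proof -
  have "dyadic d \<subseteq> (\<lambda>(k, m). dcube d k m) ` (UNIV \<times> ({..<d} \<rightarrow>\<^sub>E (UNIV :: int set)))"
  proof
    fix Q assume "Q \<in> dyadic d"
    then obtain k m where "Q = dcube d k m" unfolding dyadic_def by auto
    moreover have "dcube d k m = dcube d k (restrict m {..<d})" unfolding dcube_def by auto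
    ultimately show "Q \<in> (\<lambda>(k, m). dcube d k m) ` (UNIV \<times> ({..<d} \<rightarrow>\<^sub>E (UNIV :: int set)))"
      by (intro image_eqI[of _ _ "(k, restrict m {..<d})"]) auto
  qed
  moreover have "countable ((UNIV :: int set) \<times> ({..<d} \<rightarrow>\<^sub>E (UNIV :: int set)))"
    by (intro countable_SIGMA countable_PiE) (auto intro: countableI_type)
  ultimately show ?thesis by (metis countable_image countable_subset)
qed

lemma sets_dyadic:
  assumes "sets M = sets (\<Pi>\<^sub>M i\<in>{..<d}. (borel :: real measure))" "Q \<in> dyadic d"
  shows "Q \<in> sets M"
proof -
  obtain k m where Q: "Q = dcube d k m" using assms(2) unfolding dyadic_def by auto
  have "dcube d k m = (\<Pi>\<^sub>E i\<in>{..<d}. {2 powr (- real_of_int k) * real_of_int (m i) ..<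
      2 powr (- real_of_int k) * (real_of_int (m i) + 1)})"
    unfolding dcube_def by (auto simp: PiE_def Pi_def)
  then show ?thesis unfolding assms(1) Q by (auto intro!: sets_PiM_I_finite)
qed

text \<open>In dimension 0 the only dyadic cube is the whole one-point space, which is also a quadrant;
  this is the only use made of the quadrant hypothesis.\<close>

lemma dyadic_setting_dim_pos: "dyadic_setting d M \<Longrightarrow> 0 < d"
proof (rule ccontr)
  assume "dyadic_setting d M" "\<not> 0 < d"
  moreover have "dcube 0 0 (\<lambda>_. 0) = quadrant 0 (\<lambda>_. True)"
    unfolding dcube_def quadrant_def by auto
  moreover have "dcube 0 0 (\<lambda>_. 0) \<in> dyadic 0" unfolding dyadic_def by blast
  ultimately show False unfolding dyadic_setting_def by auto
qed

definition dyadic_subcubes :: "nat \<Rightarrow> (nat \<Rightarrow> real) set \<Rightarrow> (nat \<Rightarrow> real) set set" where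
  "dyadic_subcubes d R = insert {} {Q \<in> dyadic d. Q \<subseteq> R}"

lemma dyadic_subcubes_Pow: "dyadic_subcubes d R \<subseteq> Pow R"
  unfolding dyadic_subcubes_def by auto

lemma countable_dyadic_subcubes: "countable (dyadic_subcubes d R)"
  unfolding dyadic_subcubes_def using countable_dyadic by (auto intro: countable_subset)

lemma Int_stable_dyadic_subcubes: "Int_stable (dyadic_subcubes d R)"
  unfolding Int_stable_def
proof (intro ballI)
  fix Q Q' assume "Q \<in> dyadic_subcubes d R" "Q' \<in> dyadic_subcubes d R"
  moreover have "Q \<inter> Q' = Q \<or> Q \<inter> Q' = Q' \<or> Q \<inter> Q' = {}" if "Q \<in> dyadic d" "Q' \<in> dyadic d"
    using dyadic_nested_or_disjoint[OF that] by blast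
  ultimately show "Q \<inter> Q' \<in> dyadic_subcubes d R" unfolding dyadic_subcubes_def by auto
qed

lemma Diff_dyadic_subcube:
  assumes d: "0 < d" and R: "R \<in> dyadic d" and Q: "Q \<in> dyadic_subcubes d R"
  shows "R - Q \<in> countable_unions (dyadic_subcubes d R)"
proof (cases "Q = {}")
  case True
  then show ?thesis using R by (simp add: countable_unions_single dyadic_subcubes_def)
next
  case False
  then have Qd: "Q \<in> dyadic d" and QR: "Q \<subseteq> R" using Q unfolding dyadic_subcubes_def by auto
  obtain z where z: "z \<in> Q" using False by blast
  obtain k where k: "Q = dcube_at d k z" using dyadic_eq_dcube_at[OF Qd z] by blast
  obtain j where j: "R = dcube_at d j z" using dyadic_eq_dcube_at[OF R] z QR by blast
  have jk: "j \<le> k" using dcube_at_subset_iff[OF d] z Qd dyadic_subset_Rd QR k j by blast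
  let ?F = "{Q' \<in> dyadic d. Q' \<subseteq> R \<and> Q' \<inter> Q = {}}"
  have "R - Q \<subseteq> \<Union>?F"
  proof
    fix y assume y: "y \<in> R - Q"
    have yS: "y \<in> Rd d" using y R dyadic_subset_Rd by blast
    have "dcube_at d k y \<subseteq> R"
      using j y dcube_at_eq[of y d j z] dcube_at_antimono[OF jk] by auto
    moreover have "dcube_at d k y \<inter> Q = {}"
      using y dcube_at_eq dcube_at_self[OF yS] unfolding k by blast
    ultimately show "y \<in> \<Union>?F" using dcube_at_dyadic[OF yS] dcube_at_self[OF yS] by blast
  qed
  then have "R - Q = \<Union>?F" by blast
  moreover have "countable ?F" using countable_dyadic by (auto intro: countable_subset)
  moreover have "?F \<subseteq> dyadic_subcubes d R" unfolding dyadic_subcubes_def by auto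
  ultimately show ?thesis unfolding countable_unions_def by blast
qed

lemma halfspace_in_sigma_dyadic_subcubes:
  assumes R: "R \<in> dyadic d" and i: "i < d"
  shows "{x \<in> Rd d. x i < a} \<inter> R \<in> sigma_sets R (dyadic_subcubes d R)"
proof -
  let ?F = "{Q \<in> dyadic_subcubes d R. Q \<subseteq> {x. x i < a}}"
  have "{x \<in> Rd d. x i < a} \<inter> R \<subseteq> \<Union>?F"
  proof
    fix x assume x: "x \<in> {x \<in> Rd d. x i < a} \<inter> R"
    then have xS: "x \<in> Rd d" and xi: "x i < a" and xR: "x \<in> R" by auto
    obtain j where j: "R = dcube_at d j x" using dyadic_eq_dcube_at[OF R xR] by blast
    obtain n :: nat where n: "1 / (a - x i) < 2 ^ n" using real_arch_pow[of 2 "1 / (a - x i)"] by auto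
    define k where "k = max j (int n)"
    have "2 powr real n \<le> 2 powr real_of_int k" unfolding k_def by (intro powr_mono) auto
    then have "1 / (a - x i) < 2 powr real_of_int k" using n by (simp add: powr_realpow)
    then have small: "1 / 2 powr real_of_int k < a - x i" using xi by (simp add: field_simps)
    have "dcube_at d k x \<subseteq> {x. x i < a}"
    proof
      fix y assume "y \<in> dcube_at d k x"
      then have "\<lfloor>2 powr real_of_int k * y i\<rfloor> = \<lfloor>2 powr real_of_int k * x i\<rfloor>"
        using i unfolding mem_dcube_at by auto
      then have "2 powr real_of_int k * y i < 2 powr real_of_int k * x i + 1" by linarith
      then have "y i < x i + 1 / 2 powr real_of_int k" by (simp add: field_simps)
      then show "y \<in> {x. x i < a}" using small by simp
    qed
    moreover have "dcube_at d k x \<subseteq> R" unfolding j k_def by (rule dcube_at_antimono) simp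
    ultimately have "dcube_at d k x \<in> ?F"
      using dcube_at_dyadic[OF xS] unfolding dyadic_subcubes_def by auto
    then show "x \<in> \<Union>?F" using dcube_at_self[OF xS] by blast
  qed
  moreover have "\<Union>?F \<subseteq> {x \<in> Rd d. x i < a} \<inter> R"
    using R dyadic_subset_Rd unfolding dyadic_subcubes_def by auto
  ultimately have eq: "{x \<in> Rd d. x i < a} \<inter> R = \<Union>?F" by (rule subset_antisym)
  have "countable ?F" by (rule countable_subset[OF _ countable_dyadic_subcubes]) blast
  moreover have "?F \<subseteq> sigma_sets R (dyadic_subcubes d R)" by blast
  ultimately show ?thesis
    unfolding eq by (rule sigma_algebra.countable_Union[OF sigma_algebra_sigma_sets[OF dyadic_subcubes_Pow]])
qed

lemma coordinate_set_in_sigma_dyadic_subcubes: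
  assumes R: "R \<in> dyadic d" and i: "i < d" and A: "A \<in> sets borel"
  shows "{x \<in> Rd d. x i \<in> A} \<inter> R \<in> sigma_sets R (dyadic_subcubes d R)"
proof -
  have "A \<in> sigma_sets UNIV (range lessThan)"
    using A unfolding borel_Iio by (simp add: sets_measure_of)
  then show ?thesis
  proof induction
    case (Basic a)
    then show ?case using halfspace_in_sigma_dyadic_subcubes[OF R i] by auto
  next
    case (Compl a)
    have "{x \<in> Rd d. x i \<in> UNIV - a} \<inter> R = R - ({x \<in> Rd d. x i \<in> a} \<inter> R)"
      using dyadic_subset_Rd[OF R] by auto
    then show ?case using Compl.IH by (simp add: sigma_sets.Compl)
  next
    case (Union a)
    have "{x \<in> Rd d. x i \<in> \<Union>(range a)} \<inter> R = (\<Union>j. {x \<in> Rd d. x i \<in> a j} \<inter> R)" by auto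
    then show ?case using sigma_sets.Union[OF Union.IH] by simp
  qed (simp add: sigma_sets.Empty)
qed

lemma sets_Int_in_sigma_dyadic_subcubes:
  assumes R: "R \<in> dyadic d" and B: "B \<in> sets (\<Pi>\<^sub>M i\<in>{..<d}. (borel :: real measure))"
  shows "B \<inter> R \<in> sigma_sets R (dyadic_subcubes d R)"
proof -
  have "B \<in> sigma_sets (Rd d) {{x \<in> Rd d. x i \<in> A} |i A. i \<in> {..<d} \<and> A \<in> sets borel}"
    using B unfolding sets_PiM_single by (simp add: space_PiM)
  then show ?thesis
  proof induction
    case (Basic a)
    then show ?case using coordinate_set_in_sigma_dyadic_subcubes[OF R] by auto
  next
    case (Compl a)
    have "(Rd d - a) \<inter> R = R - (a \<inter> R)" using dyadic_subset_Rd[OF R] by auto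
    then show ?case using Compl.IH by (simp add: sigma_sets.Compl)
  next
    case (Union a)
    have "\<Union>(range a) \<inter> R = (\<Union>j. a j \<inter> R)" by auto
    then show ?case using sigma_sets.Union[OF Union.IH] by simp
  qed (simp add: sigma_sets.Empty)
qed

lemma outer_approximable_dyadic_subcubes:
  assumes M: "sets M = sets (\<Pi>\<^sub>M i\<in>{..<d}. (borel :: real measure))" and d: "0 < d"
    and R: "R \<in> dyadic d" "emeasure M R < \<infinity>" and B: "B \<in> sets M" "B \<subseteq> R"
  shows "outer_approximable M (dyadic_subcubes d R) B"
proof -
  have "B \<inter> R \<in> sigma_sets R (dyadic_subcubes d R)"
    using sets_Int_in_sigma_dyadic_subcubes[OF R(1)] B(1) M by simp
  moreover have "dyadic_subcubes d R \<subseteq> sets M"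
    using sets_dyadic[OF M] unfolding dyadic_subcubes_def by auto
  moreover have "R \<in> countable_unions (dyadic_subcubes d R)"
    using R(1) by (simp add: countable_unions_single dyadic_subcubes_def)
  ultimately show ?thesis
    using outer_approximable_sigma_sets[OF Int_stable_dyadic_subcubes dyadic_subcubes_Pow _ _ R(2)]
      Diff_dyadic_subcube[OF d R(1)] B(2) by (simp add: Int_absorb2)
qed

text \<open>Inside R a dyadic cube lies below only finitely many others, so maximal members exist.\<close>

lemma maximal_dyadic_subcubes:
  assumes d: "0 < d" and R: "R \<in> dyadic d" and F: "F \<subseteq> dyadic d" "\<And>Q. Q \<in> F \<Longrightarrow> Q \<subseteq> R"
  defines "F' \<equiv> {Q \<in> F. \<forall>Q'\<in>F. Q \<subseteq> Q' \<longrightarrow> Q' = Q}"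
  shows "\<Union>F' = \<Union>F" and "disjoint F'"
proof -
  have "x \<in> \<Union>F'" if Q: "Q \<in> F" "x \<in> Q" for Q x
  proof -
    let ?S = "{Q' \<in> F. Q \<subseteq> Q'}"
    have "?S \<subseteq> {Q' \<in> dyadic d. Q \<subseteq> Q' \<and> Q' \<subseteq> R}" using F by blast
    moreover have "finite {Q' \<in> dyadic d. Q \<subseteq> Q' \<and> Q' \<subseteq> R}"
      using Q(1) F by (intro finite_dyadic_between[OF d _ R]) auto
    ultimately have "finite ?S" by (rule finite_subset)
    moreover have "?S \<noteq> {}" using Q(1) by blast
    ultimately obtain m where m: "m \<in> ?S" "\<forall>b\<in>?S. m \<le> b \<longrightarrow> m = b"
      by (rule finite_has_maximal[THEN bexE])
    then have "m \<in> F'" unfolding F'_def by auto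
    then show ?thesis using m(1) Q(2) by blast
  qed
  then show "\<Union>F' = \<Union>F" unfolding F'_def by blast
  show "disjoint F'"
  proof (rule disjointI)
    fix Q Q' assume "Q \<in> F'" "Q' \<in> F'" "Q \<noteq> Q'"
    then show "Q \<inter> Q' = {}"
      using dyadic_nested_or_disjoint[of Q d Q'] F(1) unfolding F'_def by blast
  qed
qed

lemma disjoint_dyadic_cover:
  assumes d: "0 < d" and R: "R \<in> dyadic d"
    and U: "U \<in> countable_unions (dyadic_subcubes d R)" and A: "A \<subseteq> U"
  obtains F where "countable F" "disjoint F" "F \<subseteq> dyadic d" "A \<subseteq> \<Union>F" "\<Union>F \<subseteq> U"
    "\<And>Q. Q \<in> F \<Longrightarrow> Q \<inter> A \<noteq> {}"
proof -
  obtain F where F: "U = \<Union>F" "countable F" "F \<subseteq> dyadic_subcubes d R"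
    using U unfolding countable_unions_def by blast
  define F1 where "F1 = {Q \<in> F. Q \<inter> A \<noteq> {}}"
  define F2 where "F2 = {Q \<in> F1. \<forall>Q'\<in>F1. Q \<subseteq> Q' \<longrightarrow> Q' = Q}"
  have F1: "F1 \<subseteq> dyadic d" "\<And>Q. Q \<in> F1 \<Longrightarrow> Q \<subseteq> R"
    using F(3) unfolding F1_def dyadic_subcubes_def by auto
  have F2: "\<Union>F2 = \<Union>F1" "disjoint F2" "F2 \<subseteq> F1"
    using maximal_dyadic_subcubes[OF d R F1] unfolding F2_def by auto
  show ?thesis
  proof (rule that)
    show "countable F2" using F(2) F2(3) unfolding F1_def by (auto intro: countable_subset)
    show "A \<subseteq> \<Union>F2" using A F(1) unfolding F2(1) F1_def by blast
    show "\<Union>F2 \<subseteq> U" using F(1) F2(3) unfolding F1_def by blast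
    show "\<And>Q. Q \<in> F2 \<Longrightarrow> Q \<inter> A \<noteq> {}" using F2(3) unfolding F1_def by blast
  qed (use F1(1) F2(2,3) in auto)
qed

locale cz_setting =
  fixes d :: nat and M :: "(nat \<Rightarrow> real) measure" and f :: "(nat \<Rightarrow> real) \<Rightarrow> real" and lam :: real
  assumes setting: "dyadic_setting d M" and integrable_f: "integrable M f" and lam_pos: "0 < lam"
begin

lemma dim_pos: "0 < d"
  using dyadic_setting_dim_pos[OF setting] .

lemma sets_M: "sets M = sets (\<Pi>\<^sub>M i\<in>{..<d}. (borel :: real measure))"
  using setting unfolding dyadic_setting_def by blast

lemma space_M: "space M = Rd d"
  using sets_eq_imp_space_eq[OF sets_M] by (simp add: space_PiM)

lemma sets_dyadic_M: "Q \<in> dyadic d \<Longrightarrow> Q \<in> sets M"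
  using sets_dyadic[OF sets_M] .

lemma emeasure_dyadic_finite: "Q \<in> dyadic d \<Longrightarrow> emeasure M Q < \<infinity>"
  using setting unfolding dyadic_setting_def by blast

lemma emeasure_dyadic: "Q \<in> dyadic d \<Longrightarrow> emeasure M Q = ennreal (measure M Q)"
  using emeasure_dyadic_finite by (intro emeasure_eq_ennreal_measure) (simp add: less_top)

lemma integrable_indicator_dyadic: "Q \<in> dyadic d \<Longrightarrow> integrable M (indicator Q :: _ \<Rightarrow> real)"
  using sets_dyadic_M emeasure_dyadic_finite dyadic_subset_Rd space_M
  by (simp add: integrable_indicator_iff Int_absorb2)

lemma integral_indicator_dyadic: "Q \<in> dyadic d \<Longrightarrow> (\<integral>x. indicator Q x \<partial>M) = measure M Q"
  using dyadic_subset_Rd space_M by (simp add: Int_absorb2)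

lemma borel_measurable_f: "f \<in> borel_measurable M"
  using integrable_f by (rule borel_measurable_integrable)

lemma integrable_f_indicator: "Q \<in> sets M \<Longrightarrow> integrable M (\<lambda>x. f x * indicator Q x)"
  using integrable_mult_indicator[OF _ integrable_f] by (simp add: mult.commute)

lemma integrable_abs_f_indicator: "Q \<in> sets M \<Longrightarrow> integrable M (\<lambda>x. \<bar>f x\<bar> * indicator Q x)"
  using integrable_mult_indicator[OF _ integrable_abs[OF integrable_f]] by (simp add: mult.commute)

lemma nn_integral_abs_f: "(\<integral>\<^sup>+ x. ennreal \<bar>f x\<bar> \<partial>M) = ennreal (\<integral>x. \<bar>f x\<bar> \<partial>M)"
  by (intro nn_integral_eq_integral integrable_abs integrable_f) auto

definition mass :: "(nat \<Rightarrow> real) set \<Rightarrow> real" where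
  "mass Q = (\<integral>x. \<bar>f x\<bar> * indicator Q x \<partial>M)"

lemma mass_nonneg: "0 \<le> mass Q"
  unfolding mass_def by (intro integral_nonneg_AE) auto

lemma nn_integral_abs_f_indicator:
  "Q \<in> sets M \<Longrightarrow> (\<integral>\<^sup>+x. ennreal \<bar>f x\<bar> * indicator Q x \<partial>M) = ennreal (mass Q)"
  unfolding mass_def using integrable_abs_f_indicator
  by (subst nn_integral_eq_integral[symmetric]) (auto intro!: nn_integral_cong simp: indicator_def)

lemma abs_integral_f_indicator_le: "\<bar>\<integral>x. f x * indicator Q x \<partial>M\<bar> \<le> mass Q"
  unfolding mass_def using integral_abs_bound[of M "\<lambda>x. f x * indicator Q x"] by (simp add: abs_mult)

lemma avg_abs_f: "avg M (\<lambda>y. \<bar>f y\<bar>) Q = (if measure M Q = 0 then 0 else mass Q / measure M Q)"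
  unfolding avg_def mass_def set_lebesgue_integral_def by (simp add: mult.commute)

lemma avg_mult_measure: "avg M f Q * measure M Q = (\<integral>x. f x * indicator Q x \<partial>M)" if "measure M Q \<noteq> 0"
  using that unfolding avg_def set_lebesgue_integral_def by (simp add: mult.commute)

lemma abs_avg_mult_measure_le: "\<bar>avg M f Q\<bar> * measure M Q \<le> mass Q"
proof (cases "measure M Q = 0")
  case False
  then show ?thesis
    using avg_mult_measure abs_integral_f_indicator_le by (metis abs_mult abs_of_nonneg measure_nonneg)
qed (simp add: mass_nonneg)

lemma abs_avg_le_avg_abs: "\<bar>avg M f Q\<bar> \<le> avg M (\<lambda>y. \<bar>f y\<bar>) Q"
proof (cases "measure M Q = 0")
  case False
  then have "0 < measure M Q" using measure_nonneg[of M Q] by linarith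
  then show ?thesis
    using abs_avg_mult_measure_le[of Q] False by (simp add: avg_abs_f pos_le_divide_eq)
qed (simp add: avg_def)

lemma mass_le_of_avg_le:
  assumes Q: "Q \<in> dyadic d" and avg: "avg M (\<lambda>y. \<bar>f y\<bar>) Q \<le> lam"
  shows "mass Q \<le> lam * measure M Q"
proof (cases "measure M Q = 0")
  case True
  then have "Q \<in> null_sets M" using emeasure_dyadic[OF Q] sets_dyadic_M[OF Q] by auto
  then have "AE x in M. \<bar>f x\<bar> * indicator Q x = 0" by (auto dest: AE_not_in)
  then show ?thesis using True unfolding mass_def by (simp add: integral_eq_zero_AE)
next
  case False
  then have "0 < measure M Q" using measure_nonneg[of M Q] by linarith
  then show ?thesis using avg unfolding avg_abs_f by (simp add: pos_divide_le_eq mult.commute)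
qed

lemma sum_mass_le:
  assumes G: "finite G" "disjoint G" "G \<subseteq> sets M" and R: "R \<in> sets M" "\<And>Q. Q \<in> G \<Longrightarrow> Q \<subseteq> R"
  shows "(\<Sum>Q\<in>G. mass Q) \<le> mass R"
proof -
  have "(\<integral>x. (\<Sum>Q\<in>G. \<bar>f x\<bar> * indicator Q x) \<partial>M) = (\<Sum>Q\<in>G. mass Q)"
    unfolding mass_def using G by (intro Bochner_Integration.integral_sum integrable_abs_f_indicator) auto
  then have "(\<Sum>Q\<in>G. mass Q) = (\<integral>x. (\<Sum>Q\<in>G. \<bar>f x\<bar> * indicator Q x) \<partial>M)" ..
  also have "\<dots> \<le> mass R"
    unfolding mass_def
  proof (intro integral_mono integrable_abs_f_indicator R)
    show "integrable M (\<lambda>x. \<Sum>Q\<in>G. \<bar>f x\<bar> * indicator Q x)"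
      using G by (intro Bochner_Integration.integrable_sum integrable_abs_f_indicator) auto
    fix x
    have "disjoint_family_on id G" using G(2) by (auto simp: disjoint_family_on_def disjoint_def)
    then have "indicator (\<Union>(id ` G)) x = (\<Sum>Q\<in>G. indicator (id Q) x :: real)"
      by (rule indicator_UN_disjoint[OF G(1)])
    then have "(\<Sum>Q\<in>G. indicator Q x) = (indicator (\<Union>G) x :: real)" by simp
    also have "\<dots> \<le> indicator R x" using R(2) by (auto simp: indicator_def)
    finally show "(\<Sum>Q\<in>G. \<bar>f x\<bar> * indicator Q x) \<le> \<bar>f x\<bar> * indicator R x"
      by (simp add: sum_distrib_left[symmetric] mult_left_mono)
  qed
  finally show ?thesis .
qed

lemma mass_space: "mass (space M) = (\<integral>x. \<bar>f x\<bar> \<partial>M)"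
  unfolding mass_def by (intro Bochner_Integration.integral_cong) auto

abbreviation cubes :: "(nat \<Rightarrow> real) set set" where
  "cubes \<equiv> maxcubes d M f lam"

lemma
  assumes "Q \<in> cubes"
  shows maxcube_dyadic: "Q \<in> dyadic d"
    and maxcube_avg_gt: "lam < avg M (\<lambda>y. \<bar>f y\<bar>) Q"
    and avg_above_maxcube_le: "\<And>R. R \<in> dyadic d \<Longrightarrow> Q \<subset> R \<Longrightarrow> avg M (\<lambda>y. \<bar>f y\<bar>) R \<le> lam"
  using assms unfolding maxcubes_def by auto

lemma sets_maxcube: "Q \<in> cubes \<Longrightarrow> Q \<in> sets M"
  using maxcube_dyadic sets_dyadic_M by blast

lemma countable_maxcubes: "countable cubes"
  using countable_dyadic maxcube_dyadic by (auto intro: countable_subset)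

lemma measure_maxcube_pos: "Q \<in> cubes \<Longrightarrow> 0 < measure M Q"
  using maxcube_avg_gt[of Q] lam_pos measure_nonneg[of M Q] unfolding avg_abs_f
  by (cases "measure M Q = 0") (auto simp: less_le)

lemma mass_maxcube_gt: "Q \<in> cubes \<Longrightarrow> lam * measure M Q < mass Q"
  using maxcube_avg_gt[of Q] measure_maxcube_pos[of Q]
  by (simp add: avg_abs_f pos_less_divide_eq mult.commute)

lemma
  assumes "Q \<in> cubes"
  shows dparent_maxcube_dyadic: "dparent d Q \<in> dyadic d"
    and maxcube_psubset_dparent: "Q \<subset> dparent d Q"
  using dparent_dyadic[OF dim_pos] dyadic_psubset_dparent[OF dim_pos] maxcube_dyadic[OF assms] by auto

lemma avg_dparent_maxcube_le: "Q \<in> cubes \<Longrightarrow> avg M (\<lambda>y. \<bar>f y\<bar>) (dparent d Q) \<le> lam"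
  using avg_above_maxcube_le dparent_maxcube_dyadic maxcube_psubset_dparent by blast

lemma abs_avg_dparent_maxcube_le: "Q \<in> cubes \<Longrightarrow> \<bar>avg M f (dparent d Q)\<bar> \<le> lam"
  using abs_avg_le_avg_abs avg_dparent_maxcube_le order_trans by blast

lemma measure_maxcube_le_dparent: "Q \<in> cubes \<Longrightarrow> measure M Q \<le> measure M (dparent d Q)"
  using maxcube_psubset_dparent dparent_maxcube_dyadic maxcube_dyadic sets_dyadic_M emeasure_dyadic_finite
  by (intro measure_mono_fmeasurable) (auto simp: fmeasurable_def)

lemma measure_dparent_maxcube_pos: "Q \<in> cubes \<Longrightarrow> 0 < measure M (dparent d Q)"
  using measure_maxcube_le_dparent measure_maxcube_pos by fastforce

lemma disjoint_maxcubes: "disjoint cubes"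
proof (rule disjointI)
  fix Q Q' assume Q: "Q \<in> cubes" and Q': "Q' \<in> cubes" and "Q \<noteq> Q'"
  then have "Q \<subset> Q' \<or> Q' \<subset> Q \<or> Q \<inter> Q' = {}"
    using dyadic_nested_or_disjoint maxcube_dyadic by blast
  moreover have "\<not> Q \<subset> Q'"
    using avg_above_maxcube_le[OF Q maxcube_dyadic[OF Q']] maxcube_avg_gt[OF Q'] by fastforce
  moreover have "\<not> Q' \<subset> Q"
    using avg_above_maxcube_le[OF Q' maxcube_dyadic[OF Q]] maxcube_avg_gt[OF Q] by fastforce
  ultimately show "Q \<inter> Q' = {}" by blast
qed

text \<open>Both averages are controlled by the mass of Q: the first trivially, the second because
  the parent average is at most \<lambda> < avg(|f|, Q).\<close>

lemma jump_maxcube_le: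
  assumes Q: "Q \<in> cubes"
  shows "\<bar>avg M f Q - avg M f (dparent d Q)\<bar> * measure M Q \<le> 2 * mass Q"
proof -
  have "\<bar>avg M f (dparent d Q)\<bar> * measure M Q \<le> lam * measure M Q"
    using abs_avg_dparent_maxcube_le[OF Q] by (simp add: mult_right_mono)
  also have "\<dots> \<le> mass Q" using mass_maxcube_gt[OF Q] by simp
  finally have "\<bar>avg M f (dparent d Q)\<bar> * measure M Q \<le> mass Q" .
  moreover have "\<bar>avg M f Q - avg M f (dparent d Q)\<bar> * measure M Q
      \<le> \<bar>avg M f Q\<bar> * measure M Q + \<bar>avg M f (dparent d Q)\<bar> * measure M Q"
    by (simp add: mult_right_mono flip: distrib_right)
  ultimately show ?thesis using abs_avg_mult_measure_le[of Q] by simp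
qed

lemma infsum_maxcubes_le_mass:
  assumes "\<And>Q. Q \<in> cubes \<Longrightarrow> u Q \<le> ennreal (c * mass Q)" "0 \<le> c"
  shows "(\<Sum>\<^sub>\<infinity>Q\<in>cubes. u Q) \<le> ennreal c * (\<integral>\<^sup>+ x. ennreal \<bar>f x\<bar> \<partial>M)"
proof (rule infsum_le_finite_sums)
  fix F assume F: "finite F" "F \<subseteq> cubes"
  have "(\<Sum>Q\<in>F. u Q) \<le> (\<Sum>Q\<in>F. ennreal (c * mass Q))"
    using assms(1) F by (intro sum_mono) auto
  also have "\<dots> = ennreal (c * (\<Sum>Q\<in>F. mass Q))"
    using mass_nonneg assms(2) by (simp add: sum_ennreal sum_distrib_left)
  also have "\<dots> \<le> ennreal (c * mass (space M))"
  proof (intro ennreal_leI mult_left_mono sum_mass_le F(1) assms(2))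
    show "disjoint F" using pairwise_subset[OF disjoint_maxcubes F(2)] .
    show "F \<subseteq> sets M" "\<And>Q. Q \<in> F \<Longrightarrow> Q \<subseteq> space M"
      using F(2) sets_maxcube sets.sets_into_space by blast+
  qed simp
  also have "\<dots> = ennreal c * (\<integral>\<^sup>+ x. ennreal \<bar>f x\<bar> \<partial>M)"
    using assms(2) by (simp add: mass_space nn_integral_abs_f ennreal_mult)
  finally show "(\<Sum>Q\<in>F. u Q) \<le> ennreal c * (\<integral>\<^sup>+ x. ennreal \<bar>f x\<bar> \<partial>M)" .
qed (rule nonneg_summable_on_complete, simp)

section \<open>The bound on |f| outside \<Omega>\<close>

lemma avg_le_outside_Omega:
  assumes "x \<in> space M" "x \<notin> Omega d M f lam" "R \<in> dyadic d" "x \<in> R"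
  shows "avg M (\<lambda>y. \<bar>f y\<bar>) R \<le> lam"
proof -
  have "ereal (avg M (\<lambda>y. \<bar>f y\<bar>) R) \<le> dyadic_max d M f x"
    unfolding dyadic_max_def using assms(3,4) by (intro SUP_upper) simp
  also have "\<dots> \<le> ereal lam" using assms(1,2) unfolding Omega_def by simp
  finally show ?thesis by simp
qed

lemma Omega_eq: "Omega d M f lam = space M \<inter> \<Union>{R \<in> dyadic d. lam < avg M (\<lambda>y. \<bar>f y\<bar>) R}"
  unfolding Omega_def dyadic_max_def less_SUP_iff by auto

lemma sets_Omega: "Omega d M f lam \<in> sets M"
proof -
  have "\<Union>{R \<in> dyadic d. lam < avg M (\<lambda>y. \<bar>f y\<bar>) R} \<in> sets M"
    using countable_dyadic sets_dyadic_M by (intro sets.countable_Union) (auto intro: countable_subset)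
  then show ?thesis unfolding Omega_eq by auto
qed

lemma mass_le_if_meets_outside_Omega:
  assumes Q: "Q \<in> dyadic d" and y: "y \<in> Q" "y \<in> space M" "y \<notin> Omega d M f lam"
  shows "mass Q \<le> lam * measure M Q"
  using mass_le_of_avg_le[OF Q avg_le_outside_Omega[OF y(2,3) Q y(1)]] .

lemma nn_integral_abs_f_disjoint_cubes_le:
  assumes F: "countable F" "disjoint F" "F \<subseteq> dyadic d" and mass: "\<And>Q. Q \<in> F \<Longrightarrow> mass Q \<le> lam * measure M Q"
  shows "(\<integral>\<^sup>+x. ennreal \<bar>f x\<bar> * indicator (\<Union>F) x \<partial>M) \<le> ennreal lam * emeasure M (\<Union>F)"
proof -
  have Fs: "F \<subseteq> sets M" using F(3) sets_dyadic_M by blast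
  have "(\<integral>\<^sup>+x. ennreal \<bar>f x\<bar> * indicator (\<Union>F) x \<partial>M)
      = (\<Sum>\<^sub>\<infinity>Q\<in>F. \<integral>\<^sup>+x. ennreal \<bar>f x\<bar> * indicator Q x \<partial>M)"
    using F(1,2) Fs borel_measurable_f by (intro nn_integral_indicator_disjoint_Union) auto
  also have "\<dots> = (\<Sum>\<^sub>\<infinity>Q\<in>F. ennreal (mass Q))"
    using Fs nn_integral_abs_f_indicator by (intro infsum_cong) blast
  also have "\<dots> \<le> (\<Sum>\<^sub>\<infinity>Q\<in>F. ennreal lam * emeasure M Q)"
  proof (intro infsum_mono)
    fix Q assume Q: "Q \<in> F"
    have "ennreal (mass Q) \<le> ennreal (lam * measure M Q)" using mass[OF Q] by (rule ennreal_leI)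
    then show "ennreal (mass Q) \<le> ennreal lam * emeasure M Q"
      using emeasure_dyadic Q F(3) lam_pos by (auto simp: ennreal_mult)
  qed (auto intro: nonneg_summable_on_complete)
  also have "\<dots> = (\<Sum>\<^sub>\<infinity>Q\<in>F. \<integral>\<^sup>+x. ennreal lam * indicator Q x \<partial>M)"
    using Fs by (intro infsum_cong nn_integral_cmult_indicator[symmetric]) blast
  also have "\<dots> = ennreal lam * emeasure M (\<Union>F)"
    using nn_integral_indicator_disjoint_Union[OF F(1,2) Fs, of "\<lambda>_. ennreal lam"] F(1) Fs
    by (simp add: nn_integral_cmult_indicator sets.countable_Union)
  finally show ?thesis .
qed

text \<open>A set A \<subseteq> R outside \<Omega> on which |f| \<ge> \<lambda> + \<eta> is covered, up to measure e, by disjoint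
  dyadic cubes that meet A; such cubes are not contained in \<Omega>, so |f| has average at most \<lambda> on
  them.\<close>

lemma measure_large_values_outside_Omega:
  assumes R: "R \<in> dyadic d" and A: "A \<in> sets M" "A \<subseteq> R - Omega d M f lam"
    and large: "\<And>x. x \<in> A \<Longrightarrow> lam + \<eta> \<le> \<bar>f x\<bar>" and "0 \<le> \<eta>" and e: "0 < e"
  shows "(lam + \<eta>) * measure M A \<le> lam * (measure M A + e)"
proof -
  have AR: "A \<subseteq> R" using A(2) by blast
  have finA: "emeasure M A = ennreal (measure M A)"
    using emeasure_mono[OF AR sets_dyadic_M[OF R]] emeasure_dyadic_finite[OF R]
    by (intro emeasure_eq_ennreal_measure) (auto simp: top_unique)
  obtain U where U: "U \<in> countable_unions (dyadic_subcubes d R)" "A \<subseteq> U" "emeasure M (U - A) \<le> ennreal e"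
    using outer_approximable_dyadic_subcubes[OF sets_M dim_pos R emeasure_dyadic_finite[OF R] A(1) AR] e
    unfolding outer_approximable_def by blast
  have "dyadic_subcubes d R \<subseteq> sets M" using sets_dyadic_M unfolding dyadic_subcubes_def by auto
  then have Us: "U \<in> sets M" using countable_unions_sets U(1) by blast
  obtain F where F: "countable F" "disjoint F" "F \<subseteq> dyadic d" "A \<subseteq> \<Union>F" "\<Union>F \<subseteq> U"
    "\<And>Q. Q \<in> F \<Longrightarrow> Q \<inter> A \<noteq> {}"
    using disjoint_dyadic_cover[OF dim_pos R U(1,2)] by blast
  have "mass Q \<le> lam * measure M Q" if "Q \<in> F" for Q
    using F(6)[OF that] F(3) that A sets.sets_into_space mass_le_if_meets_outside_Omega by blast
  then have "(\<integral>\<^sup>+x. ennreal \<bar>f x\<bar> * indicator (\<Union>F) x \<partial>M) \<le> ennreal lam * emeasure M (\<Union>F)"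
    using nn_integral_abs_f_disjoint_cubes_le[OF F(1-3)] by blast
  have "ennreal (lam + \<eta>) * emeasure M A = (\<integral>\<^sup>+x. ennreal (lam + \<eta>) * indicator A x \<partial>M)"
    using A(1) by (rule nn_integral_cmult_indicator[symmetric])
  also have "\<dots> \<le> (\<integral>\<^sup>+x. ennreal \<bar>f x\<bar> * indicator (\<Union>F) x \<partial>M)"
    using large F(4) by (intro nn_integral_mono) (auto simp: indicator_def intro: ennreal_leI)
  also have "\<dots> \<le> ennreal lam * emeasure M (\<Union>F)" by fact
  also have "\<dots> \<le> ennreal lam * emeasure M U"
    using F(5) Us by (intro mult_left_mono emeasure_mono) auto
  also have "\<dots> \<le> ennreal lam * (emeasure M A + emeasure M (U - A))"
    using emeasure_subadditive[OF A(1), of "U - A"] U(2) Us A(1) by (intro mult_left_mono) (auto simp: Un_absorb1)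
  also have "\<dots> \<le> ennreal lam * (ennreal (measure M A) + ennreal e)"
    using finA U(3) by (intro mult_left_mono add_mono) auto
  finally have "ennreal ((lam + \<eta>) * measure M A) \<le> ennreal (lam * (measure M A + e))"
    using finA lam_pos e \<open>0 \<le> \<eta>\<close> by (simp add: ennreal_mult ennreal_plus)
  then show ?thesis using lam_pos e by (simp add: ennreal_le_iff)
qed

lemma null_large_values_outside_Omega:
  assumes R: "R \<in> dyadic d" and eta: "0 < \<eta>"
  shows "{x \<in> R - Omega d M f lam. lam + \<eta> \<le> \<bar>f x\<bar>} \<in> null_sets M"
proof -
  define A where "A = {x \<in> R - Omega d M f lam. lam + \<eta> \<le> \<bar>f x\<bar>}"
  have "A = (R - Omega d M f lam) \<inter> {x \<in> space M. lam + \<eta> \<le> \<bar>f x\<bar>}"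
    unfolding A_def using dyadic_subset_Rd[OF R] space_M by auto
  moreover have "{x \<in> space M. lam + \<eta> \<le> \<bar>f x\<bar>} \<in> sets M"
    using borel_measurable_f by measurable
  ultimately have A: "A \<in> sets M" using sets_dyadic_M[OF R] sets_Omega by auto
  have "measure M A = 0"
  proof (rule ccontr)
    assume "measure M A \<noteq> 0"
    then have pos: "0 < measure M A" using measure_nonneg[of M A] by linarith
    define e where "e = \<eta> * measure M A / (2 * lam)"
    have "0 < e" unfolding e_def using pos eta lam_pos by simp
    moreover have "A \<subseteq> R - Omega d M f lam" "\<And>x. x \<in> A \<Longrightarrow> lam + \<eta> \<le> \<bar>f x\<bar>"
      unfolding A_def by auto
    ultimately have "(lam + \<eta>) * measure M A \<le> lam * (measure M A + e)"
      using measure_large_values_outside_Omega[OF R A] eta by simp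
    moreover have "lam * e = \<eta> * measure M A / 2" unfolding e_def using lam_pos by simp
    ultimately have "\<eta> * measure M A \<le> \<eta> * measure M A / 2" by (simp add: algebra_simps)
    moreover have "0 < \<eta> * measure M A" using pos eta by simp
    ultimately show False by linarith
  qed
  moreover have "emeasure M A = ennreal (measure M A)"
    using emeasure_mono[of A R M] A sets_dyadic_M[OF R] emeasure_dyadic_finite[OF R]
    unfolding A_def by (intro emeasure_eq_ennreal_measure) (auto simp: top_unique)
  ultimately have "A \<in> null_sets M" using A by auto
  then show ?thesis unfolding A_def .
qed

theorem abs_f_le_outside_Omega: "AE x in M. x \<notin> Omega d M f lam \<longrightarrow> \<bar>f x\<bar> \<le> lam"
proof (rule AE_I')
  let ?N = "\<Union>R\<in>dyadic d. \<Union>j. {x \<in> R - Omega d M f lam. lam + 1 / real (Suc j) \<le> \<bar>f x\<bar>}"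
  show "?N \<in> null_sets M"
    using null_large_values_outside_Omega
    by (intro null_sets_UN' countable_dyadic null_sets_UN) auto
  show "{x \<in> space M. \<not> (x \<notin> Omega d M f lam \<longrightarrow> \<bar>f x\<bar> \<le> lam)} \<subseteq> ?N"
  proof
    fix x assume "x \<in> {x \<in> space M. \<not> (x \<notin> Omega d M f lam \<longrightarrow> \<bar>f x\<bar> \<le> lam)}"
    then have x: "x \<in> Rd d" "x \<notin> Omega d M f lam" "lam < \<bar>f x\<bar>" using space_M by auto
    obtain j where "inverse (real (Suc j)) < \<bar>f x\<bar> - lam"
      using reals_Archimedean[of "\<bar>f x\<bar> - lam"] x(3) by auto
    then have "lam + 1 / real (Suc j) \<le> \<bar>f x\<bar>" by (simp add: inverse_eq_divide)
    then show "x \<in> ?N"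
      using x dcube_at_self[OF x(1), of 0] dcube_at_dyadic[OF x(1), of 0] by blast
  qed
qed

section \<open>The bad parts\<close>

lemma
  assumes Q: "Q \<in> cubes"
  shows integrable_CZ_b: "integrable M (CZ_b M f Q)"
    and integral_CZ_b: "(\<integral>x. CZ_b M f Q x \<partial>M) = 0"
proof -
  have b: "CZ_b M f Q = (\<lambda>x. f x * indicator Q x - avg M f Q * indicator Q x)"
    by (auto simp: CZ_b_def algebra_simps)
  show "integrable M (CZ_b M f Q)"
    unfolding b using sets_maxcube[OF Q] integrable_indicator_dyadic[OF maxcube_dyadic[OF Q]]
    by (intro Bochner_Integration.integrable_diff integrable_f_indicator integrable_mult_right)
  have "(\<integral>x. CZ_b M f Q x \<partial>M) = (\<integral>x. f x * indicator Q x \<partial>M) - avg M f Q * measure M Q"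
    unfolding b using sets_maxcube[OF Q] integrable_indicator_dyadic[OF maxcube_dyadic[OF Q]]
      integral_indicator_dyadic[OF maxcube_dyadic[OF Q]] integrable_f_indicator
    by simp
  then show "(\<integral>x. CZ_b M f Q x \<partial>M) = 0"
    using avg_mult_measure measure_maxcube_pos[OF Q] by simp
qed

lemma nn_integral_abs_CZ_b_le:
  assumes Q: "Q \<in> cubes"
  shows "(\<integral>\<^sup>+ x. ennreal \<bar>CZ_b M f Q x\<bar> \<partial>M) \<le> ennreal (2 * mass Q)"
proof -
  have "(\<integral>\<^sup>+ x. ennreal \<bar>CZ_b M f Q x\<bar> \<partial>M)
      \<le> (\<integral>\<^sup>+ x. ennreal \<bar>f x\<bar> * indicator Q x + ennreal \<bar>avg M f Q\<bar> * indicator Q x \<partial>M)"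
    by (intro nn_integral_mono)
      (auto simp: CZ_b_def indicator_def ennreal_plus[symmetric] simp del: ennreal_plus intro!: ennreal_leI)
  also have "\<dots> = ennreal (mass Q) + ennreal \<bar>avg M f Q\<bar> * emeasure M Q"
    using sets_maxcube[OF Q] borel_measurable_f
    by (simp add: nn_integral_add nn_integral_abs_f_indicator nn_integral_cmult_indicator)
  also have "\<dots> = ennreal (mass Q + \<bar>avg M f Q\<bar> * measure M Q)"
    using emeasure_dyadic[OF maxcube_dyadic[OF Q]] mass_nonneg by (simp add: ennreal_mult ennreal_plus)
  also have "\<dots> \<le> ennreal (2 * mass Q)"
    using abs_avg_mult_measure_le[of Q] by (intro ennreal_leI) simp
  finally show ?thesis .
qed

lemma
  assumes Q: "Q \<in> cubes"
  shows integrable_CZ_beta: "integrable M (CZ_beta d M f Q)"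
    and integral_CZ_beta: "(\<integral>x. CZ_beta d M f Q x \<partial>M) = 0"
proof -
  let ?c = "avg M f Q - avg M f (dparent d Q)" and ?r = "measure M Q / measure M (dparent d Q)"
  have beta: "CZ_beta d M f Q = (\<lambda>x. ?c * indicator Q x - (?c * ?r) * indicator (dparent d Q) x)"
    by (rule ext) (simp add: CZ_beta_def right_diff_distrib mult.assoc)
  note ind = integrable_indicator_dyadic[OF maxcube_dyadic[OF Q]]
    integrable_indicator_dyadic[OF dparent_maxcube_dyadic[OF Q]]
  show "integrable M (CZ_beta d M f Q)"
    unfolding beta using ind by (intro Bochner_Integration.integrable_diff integrable_mult_right)
  have "(\<integral>x. CZ_beta d M f Q x \<partial>M) = ?c * measure M Q - ?c * ?r * measure M (dparent d Q)"
    unfolding beta using ind integral_indicator_dyadic maxcube_dyadic[OF Q] dparent_maxcube_dyadic[OF Q]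
    by simp
  then show "(\<integral>x. CZ_beta d M f Q x \<partial>M) = 0"
    using measure_dparent_maxcube_pos[OF Q] by simp
qed

lemma nn_integral_abs_CZ_beta_le:
  assumes Q: "Q \<in> cubes"
  shows "(\<integral>\<^sup>+ x. ennreal \<bar>CZ_beta d M f Q x\<bar> \<partial>M) \<le> ennreal (4 * mass Q)"
proof -
  let ?c = "\<bar>avg M f Q - avg M f (dparent d Q)\<bar>" and ?r = "measure M Q / measure M (dparent d Q)"
  have r: "0 \<le> ?r" "?r \<le> 1"
    using measure_maxcube_le_dparent[OF Q] measure_dparent_maxcube_pos[OF Q] by auto
  have "(\<integral>\<^sup>+ x. ennreal \<bar>CZ_beta d M f Q x\<bar> \<partial>M)
      \<le> (\<integral>\<^sup>+ x. ennreal ?c * indicator Q x + ennreal (?c * ?r) * indicator (dparent d Q) x \<partial>M)"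
  proof (intro nn_integral_mono)
    fix x
    have "\<bar>indicator Q x - ?r * indicator (dparent d Q) x\<bar> \<le> indicator Q x + ?r * indicator (dparent d Q) x"
      using r(1) by (intro abs_leI) auto
    then have "\<bar>CZ_beta d M f Q x\<bar> \<le> ?c * (indicator Q x + ?r * indicator (dparent d Q) x)"
      unfolding CZ_beta_def abs_mult by (intro mult_left_mono) auto
    then have "\<bar>CZ_beta d M f Q x\<bar> \<le> ?c * indicator Q x + ?c * ?r * indicator (dparent d Q) x"
      by (simp add: algebra_simps)
    then show "ennreal \<bar>CZ_beta d M f Q x\<bar>
        \<le> ennreal ?c * indicator Q x + ennreal (?c * ?r) * indicator (dparent d Q) x"
      using r by (auto simp: indicator_def ennreal_plus[symmetric] simp del: ennreal_plus intro!: ennreal_leI)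
  qed
  also have "\<dots> = ennreal ?c * emeasure M Q + ennreal (?c * ?r) * emeasure M (dparent d Q)"
    using sets_maxcube[OF Q] sets_dyadic_M[OF dparent_maxcube_dyadic[OF Q]]
    by (simp add: nn_integral_add nn_integral_cmult_indicator)
  also have "\<dots> = ennreal (2 * (?c * measure M Q))"
    using emeasure_dyadic maxcube_dyadic[OF Q] dparent_maxcube_dyadic[OF Q]
      measure_dparent_maxcube_pos[OF Q] r
    by (simp add: ennreal_mult[symmetric] ennreal_plus[symmetric] del: ennreal_plus)
  also have "\<dots> \<le> ennreal (4 * mass Q)"
    using jump_maxcube_le[OF Q] by (intro ennreal_leI) (simp add: mult.commute)
  finally show ?thesis .
qed

theorem CZ_bad_parts:
  "(\<forall>Q \<in> cubes. {x \<in> space M. CZ_b M f Q x \<noteq> 0} \<subseteq> Q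
      \<and> integrable M (CZ_b M f Q) \<and> (\<integral>x. CZ_b M f Q x \<partial>M) = 0)
   \<and> (\<Sum>\<^sub>\<infinity>Q \<in> cubes. \<integral>\<^sup>+ x. ennreal \<bar>CZ_b M f Q x\<bar> \<partial>M) \<le> 2 * (\<integral>\<^sup>+ x. ennreal \<bar>f x\<bar> \<partial>M)
   \<and> (\<forall>Q \<in> cubes. {x \<in> space M. CZ_beta d M f Q x \<noteq> 0} \<subseteq> dparent d Q
      \<and> integrable M (CZ_beta d M f Q) \<and> (\<integral>x. CZ_beta d M f Q x \<partial>M) = 0)
   \<and> (\<Sum>\<^sub>\<infinity>Q \<in> cubes. \<integral>\<^sup>+ x. ennreal \<bar>CZ_beta d M f Q x\<bar> \<partial>M) \<le> 4 * (\<integral>\<^sup>+ x. ennreal \<bar>f x\<bar> \<partial>M)"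
proof (intro conjI ballI)
  fix Q assume Q: "Q \<in> cubes"
  show "{x \<in> space M. CZ_b M f Q x \<noteq> 0} \<subseteq> Q"
    by (auto simp: CZ_b_def indicator_def)
  show "{x \<in> space M. CZ_beta d M f Q x \<noteq> 0} \<subseteq> dparent d Q"
    using maxcube_psubset_dparent[OF Q] by (auto simp: CZ_beta_def indicator_def)
qed (use integrable_CZ_b integral_CZ_b integrable_CZ_beta integral_CZ_beta
      infsum_maxcubes_le_mass[OF nn_integral_abs_CZ_b_le] infsum_maxcubes_le_mass[OF nn_integral_abs_CZ_beta_le]
    in auto)

section \<open>Moments of the transfer majorant\<close>

text \<open>The coefficients of the last sum in the definition of g, in absolute value.\<close>

definition transfer_coeff :: "(nat \<Rightarrow> real) set \<Rightarrow> ennreal" where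
  "transfer_coeff Q = ennreal \<bar>(avg M f Q - avg M f (dparent d Q)) * (measure M Q / measure M (dparent d Q))\<bar>"

definition transfer_sum :: "(nat \<Rightarrow> real) set set \<Rightarrow> (nat \<Rightarrow> real) \<Rightarrow> ennreal" where
  "transfer_sum G x = (\<Sum>Q\<in>G. transfer_coeff Q * indicator (dparent d Q) x)"

definition cubes_below :: "(nat \<Rightarrow> real) set set \<Rightarrow> (nat \<Rightarrow> real) set \<Rightarrow> (nat \<Rightarrow> real) set set" where
  "cubes_below G R = {Q \<in> G. dparent d Q \<subseteq> R}"

lemma transfer_coeff_mult_emeasure_le:
  assumes Q: "Q \<in> cubes"
  shows "transfer_coeff Q * emeasure M (dparent d Q) \<le> ennreal (2 * mass Q)"
proof -
  have "transfer_coeff Q * emeasure M (dparent d Q)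
      = ennreal (\<bar>avg M f Q - avg M f (dparent d Q)\<bar> * measure M Q)"
    unfolding transfer_coeff_def emeasure_dyadic[OF dparent_maxcube_dyadic[OF Q]]
    using measure_dparent_maxcube_pos[OF Q] by (simp add: ennreal_mult[symmetric] abs_mult)
  also have "\<dots> \<le> ennreal (2 * mass Q)"
    using jump_maxcube_le[OF Q] by (rule ennreal_leI)
  finally show ?thesis .
qed

lemma sum_transfer_coeff_le:
  assumes G: "finite G" "G \<subseteq> cubes"
  shows "(\<Sum>Q\<in>G. transfer_coeff Q * emeasure M (dparent d Q)) \<le> ennreal 2 * (\<integral>\<^sup>+x. ennreal \<bar>f x\<bar> \<partial>M)"
proof -
  have "(\<Sum>Q\<in>G. transfer_coeff Q * emeasure M (dparent d Q))
      \<le> (\<Sum>\<^sub>\<infinity>Q\<in>cubes. transfer_coeff Q * emeasure M (dparent d Q))"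
    using G by (subst infsum_finite[symmetric], simp, intro infsum_mono_neutral)
      (auto intro: nonneg_summable_on_complete)
  also have "\<dots> \<le> ennreal 2 * (\<integral>\<^sup>+x. ennreal \<bar>f x\<bar> \<partial>M)"
    using transfer_coeff_mult_emeasure_le by (intro infsum_maxcubes_le_mass) auto
  finally show ?thesis .
qed

text \<open>Carleson packing: R contains the parent of a maximal cube, so avg(|f|, R) \<le> \<lambda>, and the
  maximal cubes below R are disjoint subsets of R.\<close>

lemma transfer_packing:
  assumes G: "finite G" "G \<subseteq> cubes" and R: "R \<in> dyadic d"
  shows "(\<Sum>Q\<in>cubes_below G R. transfer_coeff Q * emeasure M (dparent d Q)) \<le> ennreal (2 * lam) * emeasure M R"
proof (cases "cubes_below G R = {}")
  case False
  then obtain Q0 where Q0: "Q0 \<in> cubes" "dparent d Q0 \<subseteq> R" using G unfolding cubes_below_def by blast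
  then have "avg M (\<lambda>y. \<bar>f y\<bar>) R \<le> lam"
    using avg_above_maxcube_le[OF Q0(1) R] maxcube_psubset_dparent[OF Q0(1)] by blast
  then have massR: "mass R \<le> lam * measure M R" using mass_le_of_avg_le[OF R] by blast
  have below: "finite (cubes_below G R)" "cubes_below G R \<subseteq> cubes" "\<And>Q. Q \<in> cubes_below G R \<Longrightarrow> Q \<subseteq> R"
    using G maxcube_psubset_dparent unfolding cubes_below_def by auto
  have "(\<Sum>Q\<in>cubes_below G R. transfer_coeff Q * emeasure M (dparent d Q))
      \<le> (\<Sum>Q\<in>cubes_below G R. ennreal (2 * mass Q))"
    using below transfer_coeff_mult_emeasure_le by (intro sum_mono) auto
  also have "\<dots> = ennreal (2 * (\<Sum>Q\<in>cubes_below G R. mass Q))"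
    using mass_nonneg by (simp add: sum_ennreal sum_distrib_left)
  also have "\<dots> \<le> ennreal (2 * mass R)"
    using below pairwise_subset[OF disjoint_maxcubes below(2)] sets_maxcube sets_dyadic_M[OF R]
    by (intro ennreal_leI mult_left_mono sum_mass_le) auto
  also have "\<dots> \<le> ennreal (2 * lam) * emeasure M R"
    using massR emeasure_dyadic[OF R] lam_pos by (simp add: ennreal_mult[symmetric] ennreal_leI)
  finally show ?thesis .
qed simp

lemma borel_measurable_transfer_sum: "finite G \<Longrightarrow> G \<subseteq> cubes \<Longrightarrow> transfer_sum G \<in> borel_measurable M"
  unfolding transfer_sum_def[abs_def] using sets_dyadic_M dparent_maxcube_dyadic
  by (intro borel_measurable_sum borel_measurable_times_ennreal) auto

text \<open>At a point x the parents containing x form a chain, so the power of the sum is controlled by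
  the chain inequality; the tail after Q is the transfer sum of the cubes below the parent of Q.\<close>

lemma transfer_sum_power_le:
  assumes G: "finite G" "G \<subseteq> cubes"
  shows "transfer_sum G x ^ Suc n
    \<le> of_nat (Suc n) * (\<Sum>Q\<in>G. transfer_coeff Q * transfer_sum (cubes_below G (dparent d Q)) x ^ n)"
proof -
  define T where "T = {Q\<in>G. x \<in> dparent d Q}"
  define r where "r Q Q' \<longleftrightarrow> dparent d Q' \<subseteq> dparent d Q" for Q Q'
  have T: "finite T" "T \<subseteq> G" using G(1) unfolding T_def by auto
  have "\<forall>t\<in>T. \<forall>s\<in>T. r t s \<or> r s t"
    unfolding T_def r_def using G(2) dparent_maxcube_dyadic dyadic_nested_or_disjoint by blast
  moreover have "\<forall>t\<in>T. \<forall>s\<in>T. \<forall>u\<in>T. r t s \<longrightarrow> r s u \<longrightarrow> r t u" unfolding r_def by blast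
  ultimately have chain: "(\<Sum>t\<in>T. transfer_coeff t) ^ Suc n
      \<le> of_nat (Suc n) * (\<Sum>t\<in>T. transfer_coeff t * (\<Sum>s\<in>{s\<in>T. r t s}. transfer_coeff s) ^ n)"
    by (rule sum_power_le_chain[OF T(1)])
  have restrict: "transfer_sum H x = (\<Sum>Q\<in>{Q\<in>H. x \<in> dparent d Q}. transfer_coeff Q)" if "finite H" for H
    unfolding transfer_sum_def using that
    by (simp add: sum.inter_filter[symmetric] indicator_def if_distrib Int_def cong: if_cong)
  have tails: "{s\<in>T. r t s} = {Q \<in> cubes_below G (dparent d t). x \<in> dparent d Q}" for t
    unfolding T_def r_def cubes_below_def by auto
  have "transfer_sum G x ^ Suc n = (\<Sum>t\<in>T. transfer_coeff t) ^ Suc n"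
    unfolding T_def using restrict[OF G(1)] by simp
  also have "\<dots> \<le> of_nat (Suc n) * (\<Sum>t\<in>T. transfer_coeff t * transfer_sum (cubes_below G (dparent d t)) x ^ n)"
    using chain G(1) by (simp add: tails restrict cubes_below_def)
  also have "\<dots> \<le> of_nat (Suc n) * (\<Sum>Q\<in>G. transfer_coeff Q * transfer_sum (cubes_below G (dparent d Q)) x ^ n)"
    using G(1) T(2) by (intro mult_left_mono sum_mono2) auto
  finally show ?thesis .
qed

lemma nn_integral_transfer_sum_power:
  assumes "finite G" "G \<subseteq> cubes"
  shows "(\<integral>\<^sup>+x. transfer_sum G x ^ Suc n \<partial>M)
    \<le> of_nat (fact (Suc n)) * ennreal (2 * lam) ^ n * (\<Sum>Q\<in>G. transfer_coeff Q * emeasure M (dparent d Q))"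
  using assms
proof (induction n arbitrary: G)
  case 0
  then have "(\<integral>\<^sup>+x. transfer_sum G x \<partial>M) = (\<Sum>Q\<in>G. transfer_coeff Q * emeasure M (dparent d Q))"
    unfolding transfer_sum_def using sets_dyadic_M dparent_maxcube_dyadic
    by (subst nn_integral_sum) (auto intro!: sum.cong nn_integral_cmult_indicator)
  then show ?case by simp
next
  case (Suc n)
  let ?below = "\<lambda>Q. cubes_below G (dparent d Q)"
  let ?c = "of_nat (fact (Suc n)) * ennreal (2 * lam) ^ n :: ennreal"
  have below: "finite (?below Q)" "?below Q \<subseteq> cubes" for Q
    using Suc.prems unfolding cubes_below_def by auto
  have meas: "(\<lambda>x. transfer_coeff Q * transfer_sum (?below Q) x ^ Suc n) \<in> borel_measurable M" for Q
    using borel_measurable_transfer_sum[OF below] by measurable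
  have "(\<integral>\<^sup>+x. transfer_sum G x ^ Suc (Suc n) \<partial>M)
      \<le> (\<integral>\<^sup>+x. of_nat (Suc (Suc n)) * (\<Sum>Q\<in>G. transfer_coeff Q * transfer_sum (?below Q) x ^ Suc n) \<partial>M)"
    using transfer_sum_power_le[OF Suc.prems] by (intro nn_integral_mono) blast
  also have "\<dots> = of_nat (Suc (Suc n)) * (\<Sum>Q\<in>G. transfer_coeff Q * (\<integral>\<^sup>+x. transfer_sum (?below Q) x ^ Suc n \<partial>M))"
    using meas borel_measurable_transfer_sum[OF below]
    by (simp add: nn_integral_cmult nn_integral_sum borel_measurable_sum)
  also have "\<dots> \<le> of_nat (Suc (Suc n)) * (\<Sum>Q\<in>G. transfer_coeff Q * (?c * (\<Sum>Q'\<in>?below Q. transfer_coeff Q' * emeasure M (dparent d Q'))))"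
    using Suc.IH[OF below] by (intro mult_left_mono sum_mono) auto
  also have "\<dots> \<le> of_nat (Suc (Suc n)) * (\<Sum>Q\<in>G. transfer_coeff Q * (?c * (ennreal (2 * lam) * emeasure M (dparent d Q))))"
    using transfer_packing[OF Suc.prems] dparent_maxcube_dyadic Suc.prems(2)
    by (intro mult_left_mono sum_mono) auto
  also have "\<dots> = of_nat (fact (Suc (Suc n))) * ennreal (2 * lam) ^ Suc n * (\<Sum>Q\<in>G. transfer_coeff Q * emeasure M (dparent d Q))"
    by (simp only: sum_distrib_left fact_Suc[of "Suc n"] of_nat_id of_nat_mult power_Suc mult_ac)
  finally show ?case .
qed

definition transfer_majorant :: "(nat \<Rightarrow> real) \<Rightarrow> ennreal" where
  "transfer_majorant x = (\<Sum>\<^sub>\<infinity>Q\<in>cubes. transfer_coeff Q * indicator (dparent d Q) x)"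

lemma borel_measurable_transfer_majorant: "transfer_majorant \<in> borel_measurable M"
  unfolding transfer_majorant_def[abs_def] using countable_maxcubes sets_dyadic_M dparent_maxcube_dyadic
  by (intro borel_measurable_infsum_ennreal borel_measurable_times_ennreal) auto

lemma nn_integral_transfer_majorant_power:
  "(\<integral>\<^sup>+x. transfer_majorant x ^ Suc n \<partial>M)
    \<le> ennreal (fact (Suc n) * 2 ^ Suc n * lam ^ n) * (\<integral>\<^sup>+x. ennreal \<bar>f x\<bar> \<partial>M)"
proof -
  obtain F where F: "\<And>k. finite (F k)" "\<And>k. F k \<subseteq> cubes" "incseq F"
    "\<And>g :: _ \<Rightarrow> ennreal. (\<Sum>\<^sub>\<infinity>i\<in>cubes. g i) = (SUP k. sum g (F k))"
    using countable_exhaustion_infsum_ennreal[OF countable_maxcubes] by metis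
  have eq: "transfer_majorant x = (SUP k. transfer_sum (F k) x)" for x
    unfolding transfer_majorant_def transfer_sum_def F(4) ..
  have inc: "incseq (\<lambda>k. transfer_sum (F k) x)" for x
    unfolding transfer_sum_def using F(1,3) by (auto simp: incseq_def intro!: sum_mono2)
  have inc_pow: "incseq (\<lambda>k x. transfer_sum (F k) x ^ Suc n)"
    unfolding incseq_def le_fun_def
  proof (intro allI impI)
    fix m k x assume "(m::nat) \<le> k"
    then show "transfer_sum (F m) x ^ Suc n \<le> transfer_sum (F k) x ^ Suc n"
      using inc[of x] by (intro power_mono) (auto simp: incseq_def)
  qed
  have "(\<integral>\<^sup>+x. transfer_majorant x ^ Suc n \<partial>M) = (\<integral>\<^sup>+x. (SUP k. transfer_sum (F k) x ^ Suc n) \<partial>M)"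
    unfolding eq by (simp only: SUP_power_incseq_ennreal[OF inc])
  also have "\<dots> = (SUP k. \<integral>\<^sup>+x. transfer_sum (F k) x ^ Suc n \<partial>M)"
    using borel_measurable_transfer_sum[OF F(1,2)]
    by (intro nn_integral_monotone_convergence_SUP[OF inc_pow]) measurable
  also have "\<dots> \<le> of_nat (fact (Suc n)) * ennreal (2 * lam) ^ n * (ennreal 2 * (\<integral>\<^sup>+x. ennreal \<bar>f x\<bar> \<partial>M))"
  proof (rule SUP_least)
    fix k
    show "(\<integral>\<^sup>+x. transfer_sum (F k) x ^ Suc n \<partial>M)
        \<le> of_nat (fact (Suc n)) * ennreal (2 * lam) ^ n * (ennreal 2 * (\<integral>\<^sup>+x. ennreal \<bar>f x\<bar> \<partial>M))"
      using order_trans[OF nn_integral_transfer_sum_power[OF F(1,2)]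
          mult_left_mono[OF sum_transfer_coeff_le[OF F(1,2)]]] by simp
  qed
  also have "\<dots> = ennreal (fact (Suc n) * (2 * lam) ^ n * 2) * (\<integral>\<^sup>+x. ennreal \<bar>f x\<bar> \<partial>M)"
    using lam_pos
    by (simp only: ennreal_of_nat_eq_real_of_nat of_nat_fact ennreal_power[symmetric] ennreal_mult
        mult.assoc zero_le_power zero_le_mult_iff fact_ge_zero order.refl less_imp_le zero_le_numeral
        simp_thms)
  also have "fact (Suc n) * (2 * lam) ^ n * 2 = fact (Suc n) * 2 ^ Suc n * lam ^ n"
    by (simp add: power_mult_distrib)
  finally show ?thesis .
qed

lemma ennreal_abs_transfer_part_le:
  "ennreal \<bar>\<Sum>\<^sub>\<infinity>Q\<in>cubes. (avg M f Q - avg M f (dparent d Q)) * (measure M Q / measure M (dparent d Q))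
      * indicator (dparent d Q) x\<bar> \<le> transfer_majorant x"
  (is "ennreal \<bar>\<Sum>\<^sub>\<infinity>Q\<in>cubes. ?t Q\<bar> \<le> _")
proof -
  have "ennreal \<bar>\<Sum>\<^sub>\<infinity>Q\<in>cubes. ?t Q\<bar> \<le> (\<Sum>\<^sub>\<infinity>Q\<in>cubes. ennreal \<bar>?t Q\<bar>)"
    by (rule ennreal_abs_infsum_le)
  also have "\<dots> = transfer_majorant x"
    unfolding transfer_majorant_def transfer_coeff_def by (intro infsum_cong) (simp add: indicator_def)
  finally show ?thesis .
qed

section \<open>The good part\<close>

definition cz_constant :: "real \<Rightarrow> real" where
  "cz_constant p = 3 powr p * (2 + fact (nat \<lfloor>p\<rfloor>) * 2 ^ nat \<lfloor>p\<rfloor> + fact (Suc (nat \<lfloor>p\<rfloor>)) * 2 ^ Suc (nat \<lfloor>p\<rfloor>))"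

lemma powr_outside_Omega_le:
  assumes "1 \<le> p"
  shows "AE x in M. ennreal (\<bar>f x * indicator (space M - Omega d M f lam) x\<bar> powr p)
    \<le> ennreal (lam powr (p - 1)) * ennreal \<bar>f x\<bar>"
  using abs_f_le_outside_Omega
proof eventually_elim
  case (elim x)
  show ?case
  proof (cases "x \<in> space M - Omega d M f lam")
    case True
    then have "\<bar>f x\<bar> powr p \<le> lam powr (p - 1) * \<bar>f x\<bar>"
      using elim assms by (intro powr_le_mult_of_le) auto
    then show ?thesis using True by (simp add: ennreal_mult[symmetric] ennreal_leI)
  qed simp
qed

lemma powr_parent_avg_part_le:
  assumes "0 < p"
  shows "ennreal (\<bar>\<Sum>\<^sub>\<infinity>Q\<in>cubes. avg M f (dparent d Q) * indicator Q x\<bar> powr p)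
    \<le> ennreal (lam powr p) * indicator (\<Union>cubes) x"
proof (cases "x \<in> \<Union>cubes")
  case True
  then obtain Q0 where Q0: "Q0 \<in> cubes" "x \<in> Q0" by blast
  have "(\<Sum>\<^sub>\<infinity>Q\<in>cubes. avg M f (dparent d Q) * indicator Q x) = (\<Sum>\<^sub>\<infinity>Q\<in>{Q0}. avg M f (dparent d Q) * indicator Q x)"
  proof (rule infsum_cong_neutral)
    fix Q assume "Q \<in> cubes - {Q0}"
    then have "x \<notin> Q" using disjoint_maxcubes Q0 by (auto simp: disjoint_def)
    then show "avg M f (dparent d Q) * indicator Q x = 0" by simp
  qed (use Q0 in auto)
  then have "\<bar>\<Sum>\<^sub>\<infinity>Q\<in>cubes. avg M f (dparent d Q) * indicator Q x\<bar> \<le> lam"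
    using Q0 abs_avg_dparent_maxcube_le by simp
  then show ?thesis using True assms by (simp add: powr_mono2 ennreal_leI)
next
  case False
  then have "(\<Sum>\<^sub>\<infinity>Q\<in>cubes. avg M f (dparent d Q) * indicator Q x) = 0"
    by (intro infsum_0) auto
  then show ?thesis using assms by simp
qed

lemma nn_integral_indicator_maxcubes_le:
  assumes "1 \<le> p"
  shows "(\<integral>\<^sup>+x. ennreal (lam powr p) * indicator (\<Union>cubes) x \<partial>M)
    \<le> ennreal (lam powr (p - 1)) * (\<integral>\<^sup>+x. ennreal \<bar>f x\<bar> \<partial>M)"
proof -
  have "(\<integral>\<^sup>+x. ennreal (lam powr p) * indicator (\<Union>cubes) x \<partial>M)
      = (\<Sum>\<^sub>\<infinity>Q\<in>cubes. \<integral>\<^sup>+x. ennreal (lam powr p) * indicator Q x \<partial>M)"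
    using countable_maxcubes disjoint_maxcubes sets_maxcube
    by (intro nn_integral_indicator_disjoint_Union) auto
  also have "\<dots> \<le> ennreal (lam powr (p - 1)) * (\<integral>\<^sup>+x. ennreal \<bar>f x\<bar> \<partial>M)"
  proof (rule infsum_maxcubes_le_mass)
    fix Q assume Q: "Q \<in> cubes"
    have "lam powr p * measure M Q = lam powr (p - 1) * (lam * measure M Q)"
      using lam_pos by (simp add: powr_diff)
    also have "\<dots> \<le> lam powr (p - 1) * mass Q" using mass_maxcube_gt[OF Q] by (simp add: mult_left_mono)
    finally show "(\<integral>\<^sup>+x. ennreal (lam powr p) * indicator Q x \<partial>M) \<le> ennreal (lam powr (p - 1) * mass Q)"
      using sets_maxcube[OF Q] emeasure_dyadic[OF maxcube_dyadic[OF Q]]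
      by (simp add: nn_integral_cmult_indicator ennreal_mult[symmetric] ennreal_leI)
  qed simp
  finally show ?thesis .
qed

lemma powr_transfer_part_le:
  assumes p: "1 \<le> p" and n: "n = nat \<lfloor>p\<rfloor>"
  shows "ennreal (\<bar>\<Sum>\<^sub>\<infinity>Q\<in>cubes. (avg M f Q - avg M f (dparent d Q)) * (measure M Q / measure M (dparent d Q))
      * indicator (dparent d Q) x\<bar> powr p)
    \<le> ennreal (lam powr (p - n)) * transfer_majorant x ^ n + ennreal (lam powr (p - n - 1)) * transfer_majorant x ^ Suc n"
    (is "ennreal (\<bar>?h\<bar> powr p) \<le> ?rhs")
proof (cases "transfer_majorant x = \<infinity>")
  case True
  have "0 < n" using n p by linarith
  then show ?thesis using True lam_pos by (simp add: ennreal_mult_top power_0_left)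
next
  case False
  define s where "s = enn2real (transfer_majorant x)"
  have s: "0 \<le> s" "transfer_majorant x = ennreal s"
    unfolding s_def using False by (auto simp: ennreal_enn2real_if)
  have "\<bar>?h\<bar> \<le> s" using ennreal_abs_transfer_part_le[of x] s by (simp add: ennreal_le_iff)
  then have "\<bar>?h\<bar> powr p \<le> s powr p" using p by (intro powr_mono2) auto
  also have "\<dots> \<le> lam powr (p - n) * s ^ n + lam powr (p - n - 1) * s ^ Suc n"
    using n p by (intro powr_le_split_powers s(1) lam_pos) linarith+
  finally have "ennreal (\<bar>?h\<bar> powr p)
      \<le> ennreal (lam powr (p - n) * s ^ n + lam powr (p - n - 1) * s ^ Suc n)"
    by (rule ennreal_leI)
  also have "\<dots> = ?rhs"
    unfolding s(2) using s(1) by (simp add: ennreal_plus ennreal_mult ennreal_power del: power_Suc)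
  finally show ?thesis .
qed

lemma nn_integral_scaled_transfer_majorant_power:
  "(\<integral>\<^sup>+x. ennreal (lam powr (q - m)) * transfer_majorant x ^ Suc m \<partial>M)
    \<le> ennreal (fact (Suc m) * 2 ^ Suc m * lam powr q) * (\<integral>\<^sup>+x. ennreal \<bar>f x\<bar> \<partial>M)"
proof -
  let ?I = "\<integral>\<^sup>+x. ennreal \<bar>f x\<bar> \<partial>M" and ?c = "fact (Suc m) * 2 ^ Suc m :: real"
  have "(\<integral>\<^sup>+x. ennreal (lam powr (q - m)) * transfer_majorant x ^ Suc m \<partial>M)
      = ennreal (lam powr (q - m)) * (\<integral>\<^sup>+x. transfer_majorant x ^ Suc m \<partial>M)"
    using borel_measurable_transfer_majorant by (simp add: nn_integral_cmult)
  also have "\<dots> \<le> ennreal (lam powr (q - m)) * (ennreal (?c * lam ^ m) * ?I)"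
    by (intro mult_left_mono nn_integral_transfer_majorant_power) simp
  also have "\<dots> = ennreal (lam powr (q - m) * (?c * lam ^ m)) * ?I"
    using lam_pos by (simp add: ennreal_mult mult.assoc)
  also have "lam powr (q - m) * (?c * lam ^ m) = ?c * (lam powr (q - m) * lam ^ m)"
    by (simp only: mult_ac)
  also have "\<dots> = ?c * lam powr q" by (simp only: powr_diff_mult_power[OF lam_pos])
  finally show ?thesis .
qed

lemma nn_integral_transfer_majorant_split_le:
  assumes p: "1 \<le> p" and n: "n = nat \<lfloor>p\<rfloor>"
  shows "(\<integral>\<^sup>+x. ennreal (lam powr (p - n)) * transfer_majorant x ^ n
      + ennreal (lam powr (p - n - 1)) * transfer_majorant x ^ Suc n \<partial>M)
    \<le> ennreal ((fact n * 2 ^ n + fact (Suc n) * 2 ^ Suc n) * lam powr (p - 1)) * (\<integral>\<^sup>+x. ennreal \<bar>f x\<bar> \<partial>M)"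
proof -
  let ?I = "\<integral>\<^sup>+x. ennreal \<bar>f x\<bar> \<partial>M"
  obtain k where k: "n = Suc k" using n p by (cases n) linarith+
  have e1: "p - real (Suc k) = (p - 1) - real k" and e2: "(p - 1) - real k - 1 = (p - 1) - real (Suc k)"
    by simp_all
  have "(\<integral>\<^sup>+x. ennreal (lam powr ((p - 1) - k)) * transfer_majorant x ^ Suc k
      + ennreal (lam powr ((p - 1) - Suc k)) * transfer_majorant x ^ Suc (Suc k) \<partial>M)
      = (\<integral>\<^sup>+x. ennreal (lam powr ((p - 1) - k)) * transfer_majorant x ^ Suc k \<partial>M)
        + (\<integral>\<^sup>+x. ennreal (lam powr ((p - 1) - Suc k)) * transfer_majorant x ^ Suc (Suc k) \<partial>M)"
    using borel_measurable_transfer_majorant by (intro nn_integral_add) auto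
  also have "\<dots> \<le> ennreal (fact (Suc k) * 2 ^ Suc k * lam powr (p - 1)) * ?I
      + ennreal (fact (Suc (Suc k)) * 2 ^ Suc (Suc k) * lam powr (p - 1)) * ?I"
    by (intro add_mono nn_integral_scaled_transfer_majorant_power)
  also have "\<dots> = ennreal (fact (Suc k) * 2 ^ Suc k * lam powr (p - 1)
      + fact (Suc (Suc k)) * 2 ^ Suc (Suc k) * lam powr (p - 1)) * ?I"
    by (rule ennreal_add_mult_distrib) auto
  also have "fact (Suc k) * 2 ^ Suc k * lam powr (p - 1) + fact (Suc (Suc k)) * 2 ^ Suc (Suc k) * lam powr (p - 1)
      = (fact (Suc k) * 2 ^ Suc k + fact (Suc (Suc k)) * 2 ^ Suc (Suc k)) * lam powr (p - 1)"
    by (rule distrib_right[symmetric])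
  finally show ?thesis unfolding k e1 e2 .
qed

lemma nn_integral_CZ_g_powr_le_majorants:
  assumes p: "1 \<le> p" and n: "n = nat \<lfloor>p\<rfloor>"
  shows "(\<integral>\<^sup>+ x. ennreal (\<bar>CZ_g d M f lam x\<bar> powr p) \<partial>M)
    \<le> ennreal (3 powr p) * ((\<integral>\<^sup>+x. ennreal (lam powr (p - 1)) * ennreal \<bar>f x\<bar> \<partial>M)
        + (\<integral>\<^sup>+x. ennreal (lam powr p) * indicator (\<Union>cubes) x \<partial>M)
        + (\<integral>\<^sup>+x. ennreal (lam powr (p - n)) * transfer_majorant x ^ n
            + ennreal (lam powr (p - n - 1)) * transfer_majorant x ^ Suc n \<partial>M))"
  unfolding CZ_g_def
proof (rule nn_integral_abs_add3_powr_le)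
  have "\<Union>cubes \<in> sets M"
    using countable_maxcubes sets_maxcube by (intro sets.countable_Union) auto
  then show "(\<lambda>x. ennreal (lam powr p) * indicator (\<Union>cubes) x) \<in> borel_measurable M"
    by measurable
  show "(\<lambda>x. ennreal (lam powr (p - 1)) * ennreal \<bar>f x\<bar>) \<in> borel_measurable M"
    using borel_measurable_f by measurable
  show "(\<lambda>x. ennreal (lam powr (p - n)) * transfer_majorant x ^ n
      + ennreal (lam powr (p - n - 1)) * transfer_majorant x ^ Suc n) \<in> borel_measurable M"
    using borel_measurable_transfer_majorant by measurable
qed (use p powr_outside_Omega_le[OF p] powr_parent_avg_part_le powr_transfer_part_le[OF p n] in auto)

theorem nn_integral_CZ_g_powr_le:
  assumes p: "1 \<le> p"
  shows "(\<integral>\<^sup>+ x. ennreal (\<bar>CZ_g d M f lam x\<bar> powr p) \<partial>M)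
    \<le> ennreal (cz_constant p * lam powr (p - 1)) * (\<integral>\<^sup>+ x. ennreal \<bar>f x\<bar> \<partial>M)"
proof -
  define n where "n = nat \<lfloor>p\<rfloor>"
  define K :: real where "K = fact n * 2 ^ n + fact (Suc n) * 2 ^ Suc n"
  let ?I = "\<integral>\<^sup>+x. ennreal \<bar>f x\<bar> \<partial>M" and ?l = "lam powr (p - 1)"
  have "(\<integral>\<^sup>+ x. ennreal (\<bar>CZ_g d M f lam x\<bar> powr p) \<partial>M)
      \<le> ennreal (3 powr p) * (ennreal ?l * ?I + ennreal ?l * ?I + ennreal (K * ?l) * ?I)"
    using nn_integral_CZ_g_powr_le_majorants[OF p n_def] nn_integral_indicator_maxcubes_le[OF p]
      nn_integral_transfer_majorant_split_le[OF p n_def] borel_measurable_f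
    by (elim order_trans) (intro mult_left_mono add_mono, auto simp: K_def nn_integral_cmult)
  also have "\<dots> = ennreal (3 powr p) * (ennreal ((?l + ?l) + K * ?l) * ?I)"
    by (simp add: ennreal_add_mult_distrib K_def)
  also have "\<dots> = ennreal (3 powr p * ((?l + ?l) + K * ?l)) * ?I"
    using K_def by (simp add: ennreal_mult mult.assoc)
  also have "3 powr p * ((?l + ?l) + K * ?l) = cz_constant p * ?l"
    unfolding cz_constant_def K_def n_def by (simp add: algebra_simps)
  finally show ?thesis .
qed

end

theorem theorem2p1:
  shows
  "(\<forall>p::real. 1 \<le> p \<longrightarrow>
      (\<exists>C::real. \<forall>(d::nat) M (f :: (nat \<Rightarrow> real) \<Rightarrow> real) (lam::real).
         dyadic_setting d M \<and> integrable M f \<and> 0 < lam \<longrightarrow>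
         (\<integral>\<^sup>+ x. ennreal (\<bar>CZ_g d M f lam x\<bar> powr p) \<partial>M)
           \<le> ennreal (C * lam powr (p - 1)) * (\<integral>\<^sup>+ x. ennreal \<bar>f x\<bar> \<partial>M)))
   \<and>
   (\<forall>(d::nat) M (f :: (nat \<Rightarrow> real) \<Rightarrow> real) (lam::real).
      dyadic_setting d M \<and> integrable M f \<and> 0 < lam \<longrightarrow>
      (\<forall>Q \<in> maxcubes d M f lam.
          {x \<in> space M. CZ_b M f Q x \<noteq> 0} \<subseteq> Q
        \<and> integrable M (CZ_b M f Q) \<and> (\<integral>x. CZ_b M f Q x \<partial>M) = 0)
    \<and> (\<Sum>\<^sub>\<infinity>Q \<in> maxcubes d M f lam. \<integral>\<^sup>+ x. ennreal \<bar>CZ_b M f Q x\<bar> \<partial>M)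
          \<le> 2 * (\<integral>\<^sup>+ x. ennreal \<bar>f x\<bar> \<partial>M)
    \<and> (\<forall>Q \<in> maxcubes d M f lam.
          {x \<in> space M. CZ_beta d M f Q x \<noteq> 0} \<subseteq> dparent d Q
        \<and> integrable M (CZ_beta d M f Q) \<and> (\<integral>x. CZ_beta d M f Q x \<partial>M) = 0)
    \<and> (\<Sum>\<^sub>\<infinity>Q \<in> maxcubes d M f lam. \<integral>\<^sup>+ x. ennreal \<bar>CZ_beta d M f Q x\<bar> \<partial>M)
          \<le> 4 * (\<integral>\<^sup>+ x. ennreal \<bar>f x\<bar> \<partial>M))"
  using cz_setting.nn_integral_CZ_g_powr_le cz_setting.CZ_bad_parts unfolding cz_setting_def
  by (intro conjI) blast+

end
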